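(* Let $u_0\in L^1(\Omega)$ satisfy $u_0\ge0$ a.e., $\int_\Omega u_0>0$ and $\int_\Omega\Gamma(u_0)<\infty$, let $V$ be Lipschitz continuous on $\Omega$, let $\mathbf u^0\in W_{\mathcal D}$ be defined by $u^0_\beta=\frac1{m_\beta}\int_{\omega_\beta}u_0\,dx$ for $\beta\in\mathcal M\cup\mathcal V$, and $\mathbf V=(V(x_K),V(x_s))_{K\in\mathcal M,s\in\mathcal V}$. Then there exists $C$ depending only on $\|u_0\|_{L^1(\Omega)}$ and $\|\nabla V\|_{L^\infty(\Omega)^d}$ such that $$\mathcal E_{\mathcal D}(\mathbf u^0)\le\mathcal E(u_0)+Ch_{\mathcal T}\le\mathcal E(u_0)+C\operatorname{diam}(\Omega).$$ In particular $\mathbf u^0\in W^{\rm en}_{\mathcal D}$.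
   Context: $\Omega\subset\mathbb R^d$ ($d\in\{2,3\}$) connected bounded open polyhedral. $p$: absolutely continuous, increasing on $(0,\infty)$, $p\in L^1_{loc}(\mathbb R_+)$, $p(u)\to+\infty$ as $u\to\infty$; if $p(0)=\lim_{u\downarrow0}p(u)$ is finite, $p(u)=2p(0)-p(-u)$ for $u\le0$; $I_p=(0,\infty)$ if $p(0)=-\infty$, else $\mathbb R$. $\Gamma(u)=\int_1^u(p(a)-p(1))da$ on $\bar I_p$, $\Gamma(u)=+\infty$ if $p(0)=-\infty$ and $u<0$ (convex, nonnegative). $\mathcal E(u)=\int_\Omega(\Gamma(u)+uV)dx$. Mesh: a discretization $\mathcal D$ with cells $\mathcal M$ (disjoint open polyhedra, closures covering $\bar\Omega$, each star-shaped w.r.t. $x_K$), vertices $\mathcal V$ at $x_s$, $\mathcal V_K$ the vertices of $K$, $\mathcal M_s$ the cells containing $s$; simplicial submesh $\mathcal T$ obtained by splitting each cell into simplices having $x_K$ as a vertex and face (sub)elements as base; $h_{\mathcal T}$ the maximal diameter of the simplices of $\mathcal T$. Mass lumping: weights $\alpha_{K,s}\ge0$ with $\sum_{s\in\mathcal V_K}\alpha_{K,s}\le1$; $m_{K,s}=\alpha_{K,s}|K|$, $m_s=\sum_{K\in\mathcal M_s}m_{K,s}$, $m_K=|K|-\sum_sm_{K,s}$, all assumed positive; disjoint open $\omega_K,\omega_{K,s}\subset K$ with closures covering $\bar K$ and $|\omega_K|=m_K$, $|\omega_{K,s}|=m_{K,s}$; $\omega_s=\bigcup_{K\in\mathcal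 M_s}\omega_{K,s}$. $W_{\mathcal D}=\{(v_K,v_s)\}$, $\pi_{\mathcal D}\mathbf v=\sum_Kv_K\mathbf 1_{\omega_K}+\sum_sv_s\mathbf 1_{\omega_s}$. $\mathcal E_{\mathcal D}(\mathbf v)=\int_\Omega(\Gamma(\pi_{\mathcal D}\mathbf v)+\pi_{\mathcal D}\mathbf v\,\pi_{\mathcal D}\mathbf V)dx$, $W^{\rm en}_{\mathcal D}=\{\mathbf v:\mathcal E_{\mathcal D}(\mathbf v)<\infty\}$. *)

theory Defs
  imports "HOL-Analysis.Analysis"
begin

definition abs_cont_on_interval :: "(real \<Rightarrow> real) \<Rightarrow> real \<Rightarrow> real \<Rightarrow> bool" where
  "abs_cont_on_interval f a b \<longleftrightarrow>
     (\<forall>\<epsilon>>0. \<exists>\<delta>>0. \<forall>(n::nat) (l::nat \<Rightarrow> real) (r::nat \<Rightarrow> real).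
        (\<forall>i<n. a \<le> l i \<and> l i \<le> r i \<and> r i \<le> b) \<and>
        (\<forall>i<n. \<forall>j<n. i \<noteq> j \<longrightarrow> {l i<..<r i} \<inter> {l j<..<r j} = {}) \<and>
        (\<Sum>i<n. r i - l i) < \<delta>
        \<longrightarrow> (\<Sum>i<n. \<bar>f (r i) - f (l i)\<bar>) < \<epsilon>)"

definition pzero :: "(real \<Rightarrow> real) \<Rightarrow> ereal" where
  "pzero p = Lim (at_right 0) (\<lambda>u. ereal (p u))"

definition admissible_p :: "(real \<Rightarrow> real) \<Rightarrow> bool" where
  "admissible_p p \<longleftrightarrow>
     (\<forall>a b. 0 < a \<longrightarrow> a \<le> b \<longrightarrow> abs_cont_on_interval p a b) \<and>
     strict_mono_on {0<..} p \<and>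
     (\<forall>R\<ge>0. p integrable_on {0..R}) \<and>
     filterlim p at_top at_top \<and>
     (pzero p \<noteq> -\<infinity> \<longrightarrow> (\<forall>u\<le>0. p u = 2 * real_of_ereal (pzero p) - p (- u)))"

definition Gam :: "(real \<Rightarrow> real) \<Rightarrow> real \<Rightarrow> ereal" where
  "Gam p u =
     (if pzero p = -\<infinity> \<and> u < 0 then \<infinity>
      else ereal (if 1 \<le> u then integral {1..u} (\<lambda>a. p a - p 1)
                  else - integral {u..1} (\<lambda>a. p a - p 1)))"

text \<open>E(u) = int_Omega (Gamma(u) + u V) dx; Gamma is nonnegative and u V is integrable
  in all uses, so the integral is split into a nonnegative part and a Lebesgue integral.\<close>
definition Energy :: "(real \<Rightarrow> real) \<Rightarrow> 'a::euclidean_space set \<Rightarrow> ('a \<Rightarrow> real) \<Rightarrow> ('a \<Rightarrow> real) \<Rightarrow> ereal" where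
  "Energy p \<Omega> V u =
     enn2ereal (\<integral>\<^sup>+ x\<in>\<Omega>. e2ennreal (Gam p (u x)) \<partial>lebesgue)
     + ereal (LINT x:\<Omega>|lebesgue. u x * V x)"

definition polyhedral_open :: "'a::euclidean_space set \<Rightarrow> bool" where
  "polyhedral_open S \<longleftrightarrow> open S \<and>
     (\<exists>P. finite P \<and> (\<forall>Q\<in>P. polytope Q) \<and> closure S = \<Union>P)"

definition polyhedral_cell :: "'a::euclidean_space set \<Rightarrow> bool" where
  "polyhedral_cell K \<longleftrightarrow> polyhedral_open K \<and> K = interior (closure K)"

definition star_shaped_wrt :: "'a::euclidean_space set \<Rightarrow> 'a \<Rightarrow> bool" where
  "star_shaped_wrt K c \<longleftrightarrow> c \<in> K \<and> (\<forall>y\<in>K. closed_segment c y \<subseteq> K)"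

definition cells_of :: "'a set set \<Rightarrow> ('a set \<Rightarrow> 'a set) \<Rightarrow> 'a \<Rightarrow> 'a set set" where
  "cells_of \<M> VK s = {K \<in> \<M>. s \<in> VK K}"

definition mKs :: "('a::euclidean_space set \<Rightarrow> 'a \<Rightarrow> real) \<Rightarrow> 'a set \<Rightarrow> 'a \<Rightarrow> real" where
  "mKs \<alpha> K s = \<alpha> K s * measure lebesgue K"

definition mV :: "'a::euclidean_space set set \<Rightarrow> ('a set \<Rightarrow> 'a set) \<Rightarrow> ('a set \<Rightarrow> 'a \<Rightarrow> real) \<Rightarrow> 'a \<Rightarrow> real" where
  "mV \<M> VK \<alpha> s = (\<Sum>K\<in>cells_of \<M> VK s. mKs \<alpha> K s)"

definition mC :: "('a::euclidean_space set \<Rightarrow> 'a set) \<Rightarrow> ('a set \<Rightarrow> 'a \<Rightarrow> real) \<Rightarrow> 'a set \<Rightarrow> real" where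
  "mC VK \<alpha> K = measure lebesgue K - (\<Sum>s\<in>VK K. mKs \<alpha> K s)"

definition omega_v :: "'a set set \<Rightarrow> ('a set \<Rightarrow> 'a set) \<Rightarrow> ('a set \<Rightarrow> 'a \<Rightarrow> 'a set) \<Rightarrow> 'a \<Rightarrow> 'a set" where
  "omega_v \<M> VK \<omega>Ks s = (\<Union>K\<in>cells_of \<M> VK s. \<omega>Ks K s)"

definition h_mesh :: "'a::euclidean_space set set \<Rightarrow> real" where
  "h_mesh \<T> = Max (diameter ` \<T>)"

text \<open>Cells are sets K in M with centre xc K; vertices are identified with their
  locations x_s (the set Vt); VK K are the vertices of K; simplices of T are closed
  d-simplices; \<alpha> K s the lumping weights; \<omega>K K and \<omega>Ks K s the lumping subsets.\<close>
definition discretization ::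
  "'a::euclidean_space set \<Rightarrow> 'a set set \<Rightarrow> ('a set \<Rightarrow> 'a) \<Rightarrow> 'a set \<Rightarrow> ('a set \<Rightarrow> 'a set)
   \<Rightarrow> 'a set set \<Rightarrow> ('a set \<Rightarrow> 'a \<Rightarrow> real) \<Rightarrow> ('a set \<Rightarrow> 'a set) \<Rightarrow> ('a set \<Rightarrow> 'a \<Rightarrow> 'a set) \<Rightarrow> bool" where
  "discretization \<Omega> \<M> xc Vt VK \<T> \<alpha> \<omega>K \<omega>Ks \<longleftrightarrow>
     \<comment> \<open>cells\<close>
     finite \<M> \<and> \<M> \<noteq> {} \<and>
     (\<forall>K\<in>\<M>. polyhedral_cell K \<and> K \<subseteq> \<Omega> \<and> star_shaped_wrt K (xc K)) \<and>
     (\<forall>K\<in>\<M>. \<forall>L\<in>\<M>. K \<noteq> L \<longrightarrow> K \<inter> L = {}) \<and>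
     \<Union>(closure ` \<M>) = closure \<Omega> \<and>
     \<comment> \<open>vertices\<close>
     finite Vt \<and> Vt = \<Union>(VK ` \<M>) \<and>
     (\<forall>K\<in>\<M>. VK K \<subseteq> frontier K) \<and>
     \<comment> \<open>simplicial submesh\<close>
     finite \<T> \<and>
     (\<forall>T\<in>\<T>. int DIM('a) simplex T) \<and>
     (\<forall>T\<in>\<T>. \<forall>T'\<in>\<T>. T \<noteq> T' \<longrightarrow> interior T \<inter> interior T' = {}) \<and>
     (\<forall>T\<in>\<T>. \<exists>K\<in>\<M>. T \<subseteq> closure K \<and> xc K extreme_point_of T \<and>
        convex hull {v. v extreme_point_of T \<and> v \<noteq> xc K} \<subseteq> frontier K) \<and>
     (\<forall>K\<in>\<M>. closure K = \<Union>{T\<in>\<T>. T \<subseteq> closure K}) \<and>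
     (\<forall>K\<in>\<M>. \<forall>s\<in>VK K. \<exists>T\<in>\<T>. T \<subseteq> closure K \<and> s extreme_point_of T) \<and>
     \<comment> \<open>mass lumping\<close>
     (\<forall>K\<in>\<M>. (\<forall>s\<in>VK K. \<alpha> K s \<ge> 0) \<and> (\<Sum>s\<in>VK K. \<alpha> K s) \<le> 1) \<and>
     (\<forall>K\<in>\<M>. \<forall>s\<in>VK K. mKs \<alpha> K s > 0) \<and>
     (\<forall>s\<in>Vt. mV \<M> VK \<alpha> s > 0) \<and>
     (\<forall>K\<in>\<M>. mC VK \<alpha> K > 0) \<and>
     (\<forall>K\<in>\<M>. open (\<omega>K K) \<and> \<omega>K K \<subseteq> K \<and> measure lebesgue (\<omega>K K) = mC VK \<alpha> K \<and>
        (\<forall>s\<in>VK K. open (\<omega>Ks K s) \<and> \<omega>Ks K s \<subseteq> K \<and>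
                   measure lebesgue (\<omega>Ks K s) = mKs \<alpha> K s \<and> \<omega>K K \<inter> \<omega>Ks K s = {}) \<and>
        (\<forall>s\<in>VK K. \<forall>s'\<in>VK K. s \<noteq> s' \<longrightarrow> \<omega>Ks K s \<inter> \<omega>Ks K s' = {}) \<and>
        closure K = closure (\<omega>K K) \<union> (\<Union>s\<in>VK K. closure (\<omega>Ks K s)))"

definition piD :: "'a set set \<Rightarrow> 'a set \<Rightarrow> ('a set \<Rightarrow> 'a set) \<Rightarrow> ('a set \<Rightarrow> 'a set)
   \<Rightarrow> ('a set \<Rightarrow> 'a \<Rightarrow> 'a set) \<Rightarrow> ('a set \<Rightarrow> real) \<Rightarrow> ('a \<Rightarrow> real) \<Rightarrow> 'a \<Rightarrow> real" where
  "piD \<M> Vt VK \<omega>K \<omega>Ks vK vs x =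
     (\<Sum>K\<in>\<M>. vK K * indicator (\<omega>K K) x) + (\<Sum>s\<in>Vt. vs s * indicator (omega_v \<M> VK \<omega>Ks s) x)"

end

theory Submission
  imports Defs
begin

text \<open>The discrete energy is \<open>\<integral> \<Gamma>(\<pi>\<^sub>D u\<^sup>0) + \<integral> \<pi>\<^sub>D u\<^sup>0 \<pi>\<^sub>D V\<close>, where \<open>\<pi>\<^sub>D u\<^sup>0\<close> is constant on
  each lumping region \<open>\<omega>\<^sub>\<beta>\<close> and equal there to the mean of \<open>u\<^sub>0\<close>. As \<open>\<Gamma>\<close> is convex, Jensen's
  inequality on every \<open>\<omega>\<^sub>\<beta>\<close> gives \<open>\<integral> \<Gamma>(\<pi>\<^sub>D u\<^sup>0) \<le> \<integral> \<Gamma>(u\<^sub>0)\<close>. As \<open>\<pi>\<^sub>D V\<close> is constant on each \<open>\<omega>\<^sub>\<beta>\<close>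
  too, \<open>\<integral> \<pi>\<^sub>D u\<^sup>0 \<pi>\<^sub>D V = \<integral> u\<^sub>0 \<pi>\<^sub>D V\<close>, and \<open>|\<pi>\<^sub>D V - V| \<le> 2 \<parallel>\<nabla>V\<parallel>\<^sub>\<infinity> h\<^sub>T\<close>: every point of the closure
  of a cell \<open>K\<close>, in particular every vertex of \<open>K\<close>, is within \<open>h\<^sub>T\<close> of the centre \<open>x\<^sub>K\<close> (both lie in one
  simplex of the submesh) and is reached from it along segments inside the star-shaped cell, on which
  \<open>V\<close> is \<open>\<parallel>\<nabla>V\<parallel>\<^sub>\<infinity>\<close>-Lipschitz. Hence one can take \<open>C = 2 \<parallel>u\<^sub>0\<parallel>\<^sub>L\<^sub>1 \<parallel>\<nabla>V\<parallel>\<^sub>\<infinity>\<close>, and \<open>h\<^sub>T \<le> diam \<Omega>\<close>.\<close>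

section \<open>The function \<open>\<Gamma>\<close> and its tangents\<close>

definition oriented_integral :: "(real \<Rightarrow> real) \<Rightarrow> real \<Rightarrow> real \<Rightarrow> real" where
  "oriented_integral f a b = (if a \<le> b then integral {a..b} f else - integral {b..a} f)"

lemma oriented_integral_add:
  assumes "f integrable_on {min a (min b c)..max a (max b c)}"
  shows "oriented_integral f a b + oriented_integral f b c = oriented_integral f a c"
proof -
  have integrable: "f integrable_on {x..y}" if "min a (min b c) \<le> x" "y \<le> max a (max b c)" for x y
    using integrable_subinterval_real[OF assms, of x y] that by (cases "x \<le> y") auto
  have combine: "integral {x..y} f + integral {y..z} f = integral {x..z} f"
    if "x \<le> y" "y \<le> z" "min a (min b c) \<le> x" "z \<le> max a (max b c)" for x y z
    using Henstock_Kurzweil_Integration.integral_combine[OF that(1,2) integrable[OF that(3,4)]] .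
  show ?thesis unfolding oriented_integral_def
    using combine[of a b c] combine[of a c b] combine[of b a c] combine[of b c a]
      combine[of c a b] combine[of c b a]
    by (auto split: if_splits simp: min_def max_def)
qed

text \<open>\<open>p_domain p\<close> is the interval \<open>I\<^sub>p\<close>; \<open>Gam_real p\<close> agrees with \<open>\<Gamma>\<close> on its closure.\<close>

definition p_domain :: "(real \<Rightarrow> real) \<Rightarrow> real set" where
  "p_domain p = (if pzero p = -\<infinity> then {0<..} else UNIV)"

definition Gam_real :: "(real \<Rightarrow> real) \<Rightarrow> real \<Rightarrow> real" where
  "Gam_real p u = oriented_integral (\<lambda>a. p a - p 1) 1 u"

lemma Gam_eq_Gam_real:
  assumes "pzero p = -\<infinity> \<longrightarrow> 0 \<le> u"
  shows "Gam p u = ereal (Gam_real p u)"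
  using assms by (auto simp: Gam_def Gam_real_def oriented_integral_def)

lemma pzero_eq_Inf:
  assumes "admissible_p p"
  shows "pzero p = (INF t\<in>{0<..}. ereal (p t))"
proof -
  let ?I = "INF t\<in>{0<..}. ereal (p t)"
  have mono: "strict_mono_on {0<..} p" using assms by (simp add: admissible_p_def)
  have "((\<lambda>u. ereal (p u)) \<longlongrightarrow> ?I) (at_right 0)"
  proof (rule order_tendstoI)
    fix a assume "a < ?I"
    then have "a < ereal (p u)" if "u > 0" for u
      using that by (meson INF_lower greaterThan_iff less_le_trans)
    then show "eventually (\<lambda>u. a < ereal (p u)) (at_right 0)"
      by (auto simp: eventually_at_right_field intro!: exI[of _ 1])
  next
    fix a assume "?I < a"
    then obtain t where t: "t > 0" "ereal (p t) < a" by (auto simp: Inf_less_iff)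
    have "ereal (p u) < a" if "0 < u" "u < t" for u
    proof -
      have "p u < p t" using mono that t(1) by (auto simp: strict_mono_on_def)
      then show ?thesis using t(2) by (meson ereal_less_eq(3) less_imp_le order_le_less_trans)
    qed
    then show "eventually (\<lambda>u. ereal (p u) < a) (at_right 0)"
      using t(1) by (auto simp: eventually_at_right_field intro!: exI[of _ t])
  qed
  then show ?thesis unfolding pzero_def by (intro tendsto_Lim) auto
qed

lemma pzero_le:
  assumes "admissible_p p" "0 < t"
  shows "pzero p \<le> ereal (p t)"
  unfolding pzero_eq_Inf[OF assms(1)] by (rule INF_lower) (use assms in simp)

lemma p_mono_on_domain:
  assumes p: "admissible_p p" and "x \<in> p_domain p" "y \<in> p_domain p" "x \<le> y"
  shows "p x \<le> p y"
proof -
  have pos: "p x \<le> p y" if "0 < x" "x \<le> y" for x y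
    using p that by (metis admissible_p_def greaterThan_iff order_le_less less_le_trans strict_mono_onD)
  show ?thesis
  proof (cases "pzero p = -\<infinity>")
    case True
    then show ?thesis using assms pos by (auto simp: p_domain_def)
  next
    case False
    define c where "c = real_of_ereal (pzero p)"
    have pz: "pzero p = ereal c"
      using pzero_le[OF p, of 1] False by (cases "pzero p") (auto simp: c_def)
    have reflect: "p u = 2 * c - p (- u)" if "u \<le> 0" for u
      using p False that by (simp add: admissible_p_def c_def)
    have p0: "p 0 = c" using reflect[of 0] by simp
    have c_le: "c \<le> p t" if "0 \<le> t" for t
      using pzero_le[OF p, of t] that pz p0 by (cases "t = 0") auto
    have nonneg: "p x \<le> p y" if "0 \<le> x" "x \<le> y" for x y
      using pos[of x y] c_le[of y] p0 that by (cases "x = 0") auto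
    show ?thesis
    proof (cases "0 \<le> x")
      case True
      then show ?thesis using nonneg \<open>x \<le> y\<close> by simp
    next
      case False
      then show ?thesis
        using reflect[of x] reflect[of y] c_le[of "-x"] c_le[of y] nonneg[of "-y" "-x"] \<open>x \<le> y\<close>
        by (cases "0 \<le> y") auto
    qed
  qed
qed

lemma p_integrable_on:
  assumes ad: "admissible_p p" and "a \<le> b" and "0 \<le> a \<or> pzero p \<noteq> -\<infinity>"
  shows "p integrable_on {a..b}"
proof -
  have int0: "p integrable_on {0..R}" if "R \<ge> 0" for R
    using ad that by (simp add: admissible_p_def)
  show ?thesis
  proof (cases "0 \<le> a")
    case True
    then show ?thesis using int0[of b] assms(2) by (auto intro: integrable_subinterval_real)
  next
    case False
    then have fin: "pzero p \<noteq> -\<infinity>" using assms(3) by simp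
    define c where "c = real_of_ereal (pzero p)"
    have reflect: "p u = 2 * c - p (- u)" if "u \<le> 0" for u
      using ad fin that by (simp add: admissible_p_def c_def)
    have "(\<lambda>x. p (- x)) integrable_on {a..0}"
      using Henstock_Kurzweil_Integration.integrable_reflect_real[of p "-a" 0] int0[of "-a"] False by simp
    then have "(\<lambda>x. 2 * c - p (- x)) integrable_on {a..0}"
      by (intro integrable_diff integrable_const_ivl)
    then have "p integrable_on {a..0}"
      using integrable_cong[of "{a..0}" p "\<lambda>x. 2 * c - p (- x)"] reflect by auto
    then have "p integrable_on {a..max b 0}"
      using int0[of "max b 0"] Henstock_Kurzweil_Integration.integrable_combine[of a 0 "max b 0"] False
      by simp
    then show ?thesis by (rule integrable_subinterval_real) (use assms(2) in auto)
  qed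
qed

lemma Gam_real_tangent_le:
  assumes p: "admissible_p p" and m: "m \<in> p_domain p" and y: "pzero p = -\<infinity> \<longrightarrow> 0 \<le> y"
  shows "Gam_real p m + (p m - p 1) * (y - m) \<le> Gam_real p y"
proof -
  let ?q = "\<lambda>a. p a - p 1"
  have m0: "pzero p = -\<infinity> \<longrightarrow> 0 < m" using m by (simp add: p_domain_def split: if_splits)
  have int: "?q integrable_on {x..z}" if "min 1 (min m y) \<le> x" "x \<le> z" for x z
    using m0 y that
    by (intro integrable_diff integrable_const_ivl p_integrable_on[OF p]) (auto simp: min_def split: if_splits)
  have add: "oriented_integral ?q 1 m + oriented_integral ?q m y = oriented_integral ?q 1 y"
    by (rule oriented_integral_add[OF int]) auto
  have "?q m * (y - m) \<le> oriented_integral ?q m y"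
  proof (cases "m \<le> y")
    case True
    have "x \<in> p_domain p" if "x \<in> {m..y}" for x
      using that m m0 by (auto simp: p_domain_def)
    then have "integral {m..y} (\<lambda>x. ?q m) \<le> integral {m..y} ?q"
      using True p_mono_on_domain[OF p m] int[of m y] by (intro integral_le) auto
    then show ?thesis using True by (simp add: oriented_integral_def mult.commute)
  next
    case False
    \<comment> \<open>\<open>p y\<close> is junk if \<open>y = 0 \<notin> I\<^sub>p\<close>; changing the integrand at \<open>y\<close> does not change the integral\<close>
    define q' where "q' x = (if x = y then ?q m else ?q x)" for x
    have spike: "integral {y..m} ?q = integral {y..m} q'"
      by (rule integral_spike[of "{y}"]) (auto simp: q'_def)
    have q'_int: "q' integrable_on {y..m}"
      by (rule integrable_spike[OF int[of y m] negligible_sing[of y]]) (use False in \<open>auto simp: q'_def\<close>)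
    have dom: "x \<in> p_domain p" if "x \<in> {y..m}" "x \<noteq> y" for x
      using that m y by (auto simp: p_domain_def)
    have "integral {y..m} q' \<le> integral {y..m} (\<lambda>x. ?q m)"
      by (rule integral_le[OF q'_int]) (use p_mono_on_domain[OF p _ m] dom in \<open>auto simp: q'_def\<close>)
    then have "integral {y..m} ?q \<le> integral {y..m} (\<lambda>x. ?q m)" using spike by simp
    then show ?thesis using False by (simp add: oriented_integral_def algebra_simps)
  qed
  then show ?thesis using add by (simp add: Gam_real_def)
qed

section \<open>Jensen's inequality on lumping regions\<close>

lemma ennreal_integral_le_nn_integral:
  fixes f :: "'b \<Rightarrow> real"
  assumes "integrable M f"
  shows "ennreal (integral\<^sup>L M f) \<le> (\<integral>\<^sup>+ x. ennreal (f x) \<partial>M)"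
proof -
  have "ennreal (integral\<^sup>L M f) \<le> ennreal (integral\<^sup>L M (\<lambda>x. max (f x) 0))"
    using assms by (intro ennreal_leI integral_mono) auto
  also have "\<dots> = (\<integral>\<^sup>+ x. ennreal (max (f x) 0) \<partial>M)"
    using assms by (intro nn_integral_eq_integral[symmetric]) auto
  also have "\<dots> = (\<integral>\<^sup>+ x. ennreal (f x) \<partial>M)"
    by (intro nn_integral_cong) (simp add: max_def ennreal_eq_0_iff)
  finally show ?thesis .
qed

lemma ennreal_affine_set_integral_le:
  fixes f :: "'b \<Rightarrow> real"
  assumes P: "P \<in> sets M" "emeasure M P < \<infinity>" and f: "set_integrable M P f"
  shows "ennreal (c * measure M P + k * (LINT x:P|M. f x)) \<le> (\<integral>\<^sup>+x\<in>P. ennreal (c + k * f x) \<partial>M)"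
proof -
  have fP: "integrable M (\<lambda>x. indicator P x * f x)"
    using f by (simp add: set_integrable_def)
  have "integrable M (\<lambda>x. c * indicator P x + k * (indicator P x * f x))"
    using fP P by (intro Bochner_Integration.integrable_add integrable_mult_right integrable_real_indicator)
  moreover have "(\<integral>x. c * indicator P x + k * (indicator P x * f x) \<partial>M) = c * measure M P + k * (LINT x:P|M. f x)"
    using fP P by (simp add: set_lebesgue_integral_def integrable_real_indicator)
  moreover have "(\<lambda>x. c * indicator P x + k * (indicator P x * f x)) = (\<lambda>x. indicator P x * (c + k * f x))"
    by (simp add: fun_eq_iff algebra_simps)
  ultimately have "ennreal (c * measure M P + k * (LINT x:P|M. f x))
      \<le> (\<integral>\<^sup>+x. ennreal (indicator P x * (c + k * f x)) \<partial>M)"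
    using ennreal_integral_le_nn_integral by metis
  also have "\<dots> = (\<integral>\<^sup>+x\<in>P. ennreal (c + k * f x) \<partial>M)"
    by (intro nn_integral_cong) (auto simp: indicator_def)
  finally show ?thesis .
qed

lemma ennreal_Gam_tangent_le:
  assumes "admissible_p p" "m \<in> p_domain p" "0 \<le> y"
  shows "ennreal (Gam_real p m + (p m - p 1) * (y - m)) \<le> e2ennreal (Gam p y)"
  using Gam_real_tangent_le[OF assms(1,2), of y] assms(3) by (simp add: Gam_eq_Gam_real ennreal_leI)

text \<open>Jensen's inequality for \<open>\<Gamma>\<close> on a set \<open>P\<close> of finite positive measure, through the tangent
  of \<open>\<Gamma>\<close> at the mean: \<open>\<Gamma> \<circ> f\<close> need not be measurable, so the bound is stated for an affine
  minorant \<open>c + k f\<close>, which can be summed over several sets. If the mean is \<open>0 \<notin> I\<^sub>p\<close>, then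
  \<open>f = 0\<close> a.e. on \<open>P\<close> and a constant minorant suffices.\<close>

lemma Gam_average_le_affine_minorant:
  fixes f :: "'a::euclidean_space \<Rightarrow> real"
  assumes ad: "admissible_p p" and P: "P \<in> sets lebesgue" "0 < measure lebesgue P"
    and f: "set_integrable lebesgue P f" and nonneg: "AE x in lebesgue. x \<in> P \<longrightarrow> 0 \<le> f x"
  shows "\<exists>c k. (AE x in lebesgue. x \<in> P \<longrightarrow> ennreal (c + k * f x) \<le> e2ennreal (Gam p (f x))) \<and>
           e2ennreal (Gam p ((LINT x:P|lebesgue. f x) / measure lebesgue P)) * emeasure lebesgue P
             \<le> (\<integral>\<^sup>+x\<in>P. ennreal (c + k * f x) \<partial>lebesgue)"
proof -
  define \<mu> where "\<mu> = measure lebesgue P"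
  define m where "m = (LINT x:P|lebesgue. f x) / \<mu>"
  have "emeasure lebesgue P \<noteq> \<infinity>"
    using P(2) measure_zero_top by fastforce
  then have \<mu>: "0 < \<mu>" "emeasure lebesgue P = ennreal \<mu>"
    using P(2) by (simp_all add: \<mu>_def emeasure_eq_ennreal_measure)
  have fP: "integrable lebesgue (\<lambda>x. indicator P x * f x)"
    using f by (simp add: set_integrable_def)
  have int_f: "(\<integral>x. indicator P x * f x \<partial>lebesgue) = m * \<mu>"
    using \<mu> by (simp add: m_def set_lebesgue_integral_def)
  have nonneg': "AE x in lebesgue. 0 \<le> indicator P x * f x"
    using nonneg by eventually_elim (auto simp: indicator_def)
  then have "0 \<le> m * \<mu>" unfolding int_f[symmetric] by (rule integral_nonneg_AE)
  then have "0 \<le> m" using \<mu> by (simp add: zero_le_mult_iff)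
  have "\<exists>c k. (AE x in lebesgue. x \<in> P \<longrightarrow> ennreal (c + k * f x) \<le> e2ennreal (Gam p (f x))) \<and>
           e2ennreal (Gam p m) * emeasure lebesgue P \<le> (\<integral>\<^sup>+x\<in>P. ennreal (c + k * f x) \<partial>lebesgue)"
  proof (cases "m \<in> p_domain p")
    case True
    define k where "k = p m - p 1"
    define c where "c = Gam_real p m - k * m"
    have "AE x in lebesgue. x \<in> P \<longrightarrow> ennreal (c + k * f x) \<le> e2ennreal (Gam p (f x))"
      using nonneg
    proof eventually_elim
      case (elim x)
      have "c + k * f x = Gam_real p m + (p m - p 1) * (f x - m)" by (simp add: c_def k_def algebra_simps)
      then show ?case using elim ennreal_Gam_tangent_le[OF ad True, of "f x"] by simp
    qed
    moreover have "c * \<mu> + k * (LINT x:P|lebesgue. f x) = Gam_real p m * \<mu>"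
      using \<mu> by (simp add: c_def m_def field_simps)
    then have "e2ennreal (Gam p m) * emeasure lebesgue P
               = ennreal (c * \<mu> + k * (LINT x:P|lebesgue. f x))"
      using \<open>0 \<le> m\<close> \<mu> by (simp add: Gam_eq_Gam_real ennreal_mult'')
    ultimately show ?thesis
      using ennreal_affine_set_integral_le[OF P(1) _ f, of c k] \<mu> by (auto simp: \<mu>_def)
  next
    case False
    then have "pzero p = -\<infinity>" "m = 0" using \<open>0 \<le> m\<close> by (auto simp: p_domain_def split: if_splits)
    then have "AE x in lebesgue. indicator P x * f x = 0"
      using integral_nonneg_eq_0_iff_AE[OF fP] nonneg' int_f by simp
    then have "AE x in lebesgue. x \<in> P \<longrightarrow> ennreal (Gam_real p 0 + 0 * f x) \<le> e2ennreal (Gam p (f x))"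
      by eventually_elim (auto simp: Gam_eq_Gam_real indicator_def)
    moreover have "e2ennreal (Gam p m) * emeasure lebesgue P
                   = (\<integral>\<^sup>+x\<in>P. ennreal (Gam_real p 0 + 0 * f x) \<partial>lebesgue)"
      using P(1) \<open>m = 0\<close> by (simp add: Gam_eq_Gam_real nn_integral_cmult_indicator)
    ultimately show ?thesis by (intro exI[of _ "Gam_real p 0"] exI[of _ 0]) simp
  qed
  then show ?thesis by (simp add: m_def \<mu>_def)
qed

lemma set_integral_mult_le_perturbation:
  fixes f V W :: "'b \<Rightarrow> real"
  assumes f: "set_integrable M A f" and fV: "set_integrable M A (\<lambda>x. f x * V x)"
    and fW: "set_integrable M A (\<lambda>x. f x * W x)" and close: "AE x\<in>A in M. \<bar>W x - V x\<bar> \<le> B"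
  shows "(LINT x:A|M. f x * W x) \<le> (LINT x:A|M. f x * V x) + B * (LINT x:A|M. \<bar>f x\<bar>)"
proof -
  have "(LINT x:A|M. f x * W x) - (LINT x:A|M. f x * V x) = (LINT x:A|M. f x * W x - f x * V x)"
    using fV fW by simp
  also have "\<dots> \<le> (LINT x:A|M. B * \<bar>f x\<bar>)"
  proof (rule set_integral_mono_AE)
    show "AE x\<in>A in M. f x * W x - f x * V x \<le> B * \<bar>f x\<bar>"
      using close
    proof eventually_elim
      case (elim x)
      have "f x * W x - f x * V x \<le> \<bar>f x\<bar> * \<bar>W x - V x\<bar>"
        by (metis abs_ge_self abs_mult right_diff_distrib)
      also have "\<dots> \<le> \<bar>f x\<bar> * B" if "x \<in> A" using elim that by (simp add: mult_left_mono)
      finally show ?case by (simp add: mult.commute)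
    qed
  qed (use fV fW set_integrable_abs[OF f] in auto)
  finally show ?thesis by simp
qed

lemma sum_indicator_disjoint:
  fixes c :: "'i \<Rightarrow> 'b::semiring_1"
  assumes "finite I" "i \<in> I" "x \<in> P i" "\<And>j. j \<in> I \<Longrightarrow> j \<noteq> i \<Longrightarrow> P i \<inter> P j = {}"
  shows "(\<Sum>j\<in>I. c j * indicator (P j) x) = c i"
proof -
  have "(\<Sum>j\<in>I. c j * indicator (P j) x) = (\<Sum>j\<in>I. if j = i then c i else 0)"
    using assms by (intro sum.cong) (auto simp: indicator_def)
  then show ?thesis using assms by simp
qed

text \<open>An abstraction of the lumping regions \<open>\<omega>\<^sub>K\<close>, \<open>\<omega>\<^sub>s\<close> of a mesh: only these properties enter
  the averaging estimates.\<close>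

locale lumping_partition =
  fixes \<Omega> :: "'a::euclidean_space set" and I :: "'i set" and P :: "'i \<Rightarrow> 'a set"
  assumes finite_index: "finite I"
    and piece_sets: "\<And>i. i \<in> I \<Longrightarrow> P i \<in> sets lebesgue"
    and piece_subset: "\<And>i. i \<in> I \<Longrightarrow> P i \<subseteq> \<Omega>"
    and piece_measure_pos: "\<And>i. i \<in> I \<Longrightarrow> 0 < measure lebesgue (P i)"
    and pieces_disjoint: "\<And>i j. i \<in> I \<Longrightarrow> j \<in> I \<Longrightarrow> i \<noteq> j \<Longrightarrow> P i \<inter> P j = {}"
    and pieces_cover: "\<Omega> - (\<Union>i\<in>I. P i) \<in> null_sets lebesgue"
begin

definition piecewise :: "('i \<Rightarrow> 'b::semiring_1) \<Rightarrow> 'a \<Rightarrow> 'b" where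
  "piecewise c x = (\<Sum>i\<in>I. c i * indicator (P i) x)"

definition mean :: "('a \<Rightarrow> real) \<Rightarrow> 'i \<Rightarrow> real" where
  "mean f i = (LINT x:P i|lebesgue. f x) / measure lebesgue (P i)"

lemma piecewise_eq: "i \<in> I \<Longrightarrow> x \<in> P i \<Longrightarrow> piecewise c x = c i"
  unfolding piecewise_def by (rule sum_indicator_disjoint[OF finite_index]) (use pieces_disjoint in auto)

lemma piecewise_outside: "(\<And>i. i \<in> I \<Longrightarrow> x \<notin> P i) \<Longrightarrow> piecewise c x = 0"
  unfolding piecewise_def by (intro sum.neutral) auto

lemma piece_emeasure_finite: "i \<in> I \<Longrightarrow> emeasure lebesgue (P i) < \<infinity>"
  using piece_measure_pos measure_zero_top by (fastforce simp: less_top)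

lemma AE_in_piece: "AE x in lebesgue. x \<in> \<Omega> \<longrightarrow> (\<exists>i\<in>I. x \<in> P i)"
  using AE_not_in[OF pieces_cover] by eventually_elim auto

lemma nn_integral_piecewise:
  fixes a :: "'i \<Rightarrow> real" and g :: "real \<Rightarrow> ennreal"
  shows "(\<integral>\<^sup>+x\<in>\<Omega>. g (piecewise a x) \<partial>lebesgue) = (\<Sum>i\<in>I. g (a i) * emeasure lebesgue (P i))"
proof -
  have "(\<integral>\<^sup>+x\<in>\<Omega>. g (piecewise a x) \<partial>lebesgue) = (\<integral>\<^sup>+x. piecewise (\<lambda>i. g (a i)) x \<partial>lebesgue)"
    using AE_in_piece
  proof (intro nn_integral_cong_AE, eventually_elim)
    case (elim x)
    show ?case
    proof (cases "\<exists>i\<in>I. x \<in> P i")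
      case True
      then obtain i where i: "i \<in> I" "x \<in> P i" by blast
      then have "x \<in> \<Omega>" using piece_subset by blast
      then show ?thesis using piecewise_eq[OF i, of a] piecewise_eq[OF i, of "\<lambda>i. g (a i)"] by simp
    next
      case False
      then show ?thesis using elim by (auto simp: piecewise_outside)
    qed
  qed
  also have "\<dots> = (\<Sum>i\<in>I. g (a i) * emeasure lebesgue (P i))"
    unfolding piecewise_def using piece_sets
    by (subst nn_integral_sum) (auto simp: nn_integral_cmult_indicator)
  finally show ?thesis .
qed

lemma sum_set_nn_integral_le:
  assumes h: "\<And>i. i \<in> I \<Longrightarrow> h i \<in> borel_measurable lebesgue"
    and le: "\<And>i. i \<in> I \<Longrightarrow> AE x in lebesgue. x \<in> P i \<longrightarrow> h i x \<le> g x"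
  shows "(\<Sum>i\<in>I. \<integral>\<^sup>+x\<in>P i. h i x \<partial>lebesgue) \<le> (\<integral>\<^sup>+x\<in>\<Omega>. g x \<partial>lebesgue)"
proof -
  have "(\<Sum>i\<in>I. \<integral>\<^sup>+x\<in>P i. h i x \<partial>lebesgue) = (\<integral>\<^sup>+x. (\<Sum>i\<in>I. h i x * indicator (P i) x) \<partial>lebesgue)"
    using h piece_sets by (subst nn_integral_sum) auto
  also have "\<dots> \<le> (\<integral>\<^sup>+x\<in>\<Omega>. g x \<partial>lebesgue)"
  proof (intro nn_integral_mono_AE)
    have "AE x in lebesgue. \<forall>i\<in>I. x \<in> P i \<longrightarrow> h i x \<le> g x"
      using finite_index le by (rule AE_finite_allI)
    then show "AE x in lebesgue. (\<Sum>i\<in>I. h i x * indicator (P i) x) \<le> g x * indicator \<Omega> x"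
    proof eventually_elim
      case (elim x)
      show ?case
      proof (cases "\<exists>i\<in>I. x \<in> P i")
        case True
        then obtain i where i: "i \<in> I" "x \<in> P i" by blast
        then have "x \<in> \<Omega>" using piece_subset by blast
        then show ?thesis
          using elim i piecewise_eq[OF i, of "\<lambda>i. h i x"] by (simp add: piecewise_def)
      next
        case False
        then show ?thesis using piecewise_outside[of x] by (simp add: piecewise_def)
      qed
    qed
  qed
  finally show ?thesis .
qed

lemma Gam_piecewise_mean_le:
  assumes ad: "admissible_p p" and f: "set_integrable lebesgue \<Omega> f"
    and nonneg: "AE x in lebesgue. x \<in> \<Omega> \<longrightarrow> 0 \<le> f x"
  shows "(\<integral>\<^sup>+x\<in>\<Omega>. e2ennreal (Gam p (piecewise (mean f) x)) \<partial>lebesgue)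
         \<le> (\<integral>\<^sup>+x\<in>\<Omega>. e2ennreal (Gam p (f x)) \<partial>lebesgue)"
proof -
  define g where "g x = indicator \<Omega> x * f x" for x
  have g_meas: "g \<in> borel_measurable lebesgue"
    using f unfolding g_def set_integrable_def by (simp add: borel_measurable_integrable)
  have g_int: "set_integrable lebesgue (P i) g" if "i \<in> I" for i
    using integrable_mult_indicator[OF piece_sets[OF that], of "\<lambda>x. indicator \<Omega> x * f x"] f
    by (simp add: g_def set_integrable_def)
  have mean_g: "mean f i = (LINT x:P i|lebesgue. g x) / measure lebesgue (P i)" if "i \<in> I" for i
    using piece_subset[OF that] unfolding mean_def set_lebesgue_integral_def g_def
    by (intro arg_cong2[where f="(/)"] Bochner_Integration.integral_cong) (auto simp: indicator_def)
  have "\<forall>i\<in>I. \<exists>c k. (AE x in lebesgue. x \<in> P i \<longrightarrow> ennreal (c + k * g x) \<le> e2ennreal (Gam p (g x))) \<and>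
           e2ennreal (Gam p (mean f i)) * emeasure lebesgue (P i) \<le> (\<integral>\<^sup>+x\<in>P i. ennreal (c + k * g x) \<partial>lebesgue)"
  proof
    fix i assume i: "i \<in> I"
    have "AE x in lebesgue. x \<in> P i \<longrightarrow> 0 \<le> g x"
      using nonneg by eventually_elim (use piece_subset[OF i] in \<open>auto simp: g_def\<close>)
    then show "\<exists>c k. (AE x in lebesgue. x \<in> P i \<longrightarrow> ennreal (c + k * g x) \<le> e2ennreal (Gam p (g x))) \<and>
           e2ennreal (Gam p (mean f i)) * emeasure lebesgue (P i) \<le> (\<integral>\<^sup>+x\<in>P i. ennreal (c + k * g x) \<partial>lebesgue)"
      unfolding mean_g[OF i]
      by (rule Gam_average_le_affine_minorant[OF ad piece_sets[OF i] piece_measure_pos[OF i] g_int[OF i]])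
  qed
  then obtain c k where minorant: "\<And>i. i \<in> I \<Longrightarrow> AE x in lebesgue. x \<in> P i \<longrightarrow> ennreal (c i + k i * g x) \<le> e2ennreal (Gam p (g x))"
    and jensen: "\<And>i. i \<in> I \<Longrightarrow> e2ennreal (Gam p (mean f i)) * emeasure lebesgue (P i)
                   \<le> (\<integral>\<^sup>+x\<in>P i. ennreal (c i + k i * g x) \<partial>lebesgue)"
    by (auto simp: bchoice_iff)
  have "(\<integral>\<^sup>+x\<in>\<Omega>. e2ennreal (Gam p (piecewise (mean f) x)) \<partial>lebesgue)
      = (\<Sum>i\<in>I. e2ennreal (Gam p (mean f i)) * emeasure lebesgue (P i))"
    by (rule nn_integral_piecewise)
  also have "\<dots> \<le> (\<Sum>i\<in>I. \<integral>\<^sup>+x\<in>P i. ennreal (c i + k i * g x) \<partial>lebesgue)"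
    by (intro sum_mono jensen)
  also have "\<dots> \<le> (\<integral>\<^sup>+x\<in>\<Omega>. e2ennreal (Gam p (f x)) \<partial>lebesgue)"
  proof (rule sum_set_nn_integral_le)
    show "(\<lambda>x. ennreal (c i + k i * g x)) \<in> borel_measurable lebesgue" for i
      using g_meas by measurable
    show "AE x in lebesgue. x \<in> P i \<longrightarrow> ennreal (c i + k i * g x) \<le> e2ennreal (Gam p (f x))" if "i \<in> I" for i
      using minorant[OF that] by eventually_elim (use piece_subset[OF that] in \<open>auto simp: g_def\<close>)
  qed
  finally show ?thesis .
qed

lemma set_integral_piecewise_mean_mult:
  assumes f: "set_integrable lebesgue \<Omega> f"
  shows "set_integrable lebesgue \<Omega> (\<lambda>x. f x * piecewise w x)"
    and "(LINT x:\<Omega>|lebesgue. piecewise (mean f) x * piecewise w x) = (LINT x:\<Omega>|lebesgue. f x * piecewise w x)"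
proof -
  define g where "g x = indicator \<Omega> x * f x" for x
  have g_piece: "integrable lebesgue (\<lambda>x. indicator (P i) x * g x)" if "i \<in> I" for i
    using integrable_mult_indicator[OF piece_sets[OF that], of "\<lambda>x. indicator \<Omega> x * f x"] f
    by (simp add: g_def set_integrable_def)
  have fw: "indicator \<Omega> x * (f x * piecewise w x) = (\<Sum>i\<in>I. w i * (indicator (P i) x * g x))" for x
    by (simp add: piecewise_def g_def sum_distrib_left sum_distrib_right mult_ac)
  show "set_integrable lebesgue \<Omega> (\<lambda>x. f x * piecewise w x)"
    unfolding set_integrable_def using g_piece by (simp add: fw)
  have "(LINT x:\<Omega>|lebesgue. piecewise (mean f) x * piecewise w x)
      = (\<integral>x. piecewise (\<lambda>i. mean f i * w i) x \<partial>lebesgue)"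
    unfolding set_lebesgue_integral_def
  proof (intro Bochner_Integration.integral_cong refl)
    fix x
    show "indicator \<Omega> x *\<^sub>R (piecewise (mean f) x * piecewise w x) = piecewise (\<lambda>i. mean f i * w i) x"
    proof (cases "\<exists>i\<in>I. x \<in> P i")
      case True
      then obtain i where i: "i \<in> I" "x \<in> P i" by blast
      then have "x \<in> \<Omega>" using piece_subset by blast
      then show ?thesis
        using piecewise_eq[OF i, of "mean f"] piecewise_eq[OF i, of w]
          piecewise_eq[OF i, of "\<lambda>i. mean f i * w i"] by simp
    qed (auto simp: piecewise_outside)
  qed
  also have "\<dots> = (\<Sum>i\<in>I. mean f i * w i * measure lebesgue (P i))"
  proof -
    have "integrable lebesgue (indicat_real (P i))" if "i \<in> I" for i
      using piece_sets[OF that] piece_emeasure_finite[OF that] by (rule integrable_real_indicator)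
    then show ?thesis
      unfolding piecewise_def using piece_sets by (simp add: Bochner_Integration.integral_sum)
  qed
  also have "\<dots> = (\<Sum>i\<in>I. w i * (\<integral>x. indicator (P i) x * g x \<partial>lebesgue))"
  proof (rule sum.cong[OF refl])
    fix i assume i: "i \<in> I"
    have "(\<integral>x. indicator (P i) x * g x \<partial>lebesgue) = (LINT x:P i|lebesgue. f x)"
      unfolding set_lebesgue_integral_def g_def using piece_subset[OF i]
      by (intro Bochner_Integration.integral_cong) (auto simp: indicator_def)
    then show "mean f i * w i * measure lebesgue (P i) = w i * (\<integral>x. indicator (P i) x * g x \<partial>lebesgue)"
      using piece_measure_pos[OF i] by (simp add: mean_def)
  qed
  also have "\<dots> = (LINT x:\<Omega>|lebesgue. f x * piecewise w x)"
    unfolding set_lebesgue_integral_def using g_piece by (simp add: fw)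
  finally show "(LINT x:\<Omega>|lebesgue. piecewise (mean f) x * piecewise w x) = (LINT x:\<Omega>|lebesgue. f x * piecewise w x)" .
qed

end

section \<open>Lipschitz functions with an a.e. bound on the derivative\<close>

lemma last_level_crossing:
  fixes h :: "real \<Rightarrow> real"
  assumes cont: "continuous_on {0..1} h" and c: "h 0 < c" "c < h 1"
  obtains \<tau> where "0 \<le> \<tau>" "\<tau> < 1" "h \<tau> = c" "\<And>t. \<tau> < t \<Longrightarrow> t \<le> 1 \<Longrightarrow> c < h t"
proof -
  define S where "S = {t \<in> {0..1}. h t \<le> c}"
  have "closed S" unfolding S_def
    using continuous_closed_preimage[OF cont closed_atLeastAtMost, of "{..c}"]
    by (simp add: vimage_def Int_def conj_commute)
  have "0 \<in> S" using c by (simp add: S_def)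
  have bdd: "bdd_above S" unfolding S_def by (auto intro: bdd_aboveI[of _ 1])
  define \<tau> where "\<tau> = Sup S"
  have "\<tau> \<in> S" unfolding \<tau>_def using \<open>closed S\<close> \<open>0 \<in> S\<close> bdd closed_contains_Sup by blast
  then have \<tau>: "0 \<le> \<tau>" "\<tau> \<le> 1" "h \<tau> \<le> c" by (auto simp: S_def)
  have above: "c < h t" if "\<tau> < t" "t \<le> 1" for t
    using cSup_upper[OF _ bdd, of t] that \<tau> unfolding \<tau>_def S_def by fastforce
  obtain t where t: "\<tau> \<le> t" "t \<le> 1" "h t = c"
    using IVT'[of h \<tau> c 1] \<tau> c continuous_on_subset[OF cont, of "{\<tau>..1}"] by auto
  then have "h \<tau> = c" using above[of t] by (cases "t = \<tau>") auto
  moreover have "\<tau> < 1" using \<tau> \<open>h \<tau> = c\<close> c by (cases "\<tau> = 1") auto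
  ultimately show thesis using that \<tau> above by blast
qed

text \<open>Otherwise \<open>h t = g t - (M + \<epsilon>) t\<close> has \<open>h 0 < h 1\<close>; since the image of the null set under
  the Lipschitz map \<open>h\<close> is negligible, some level \<open>c\<close> between them is not attained there, and at
  the last crossing of \<open>c\<close> the derivative of \<open>h\<close> would be negative.\<close>

lemma increment_le_of_ae_derivative_le:
  fixes g :: "real \<Rightarrow> real"
  assumes lip: "B-lipschitz_on {0..1} g" and N: "negligible N"
    and der: "\<And>t. t \<in> {0..1} - N \<Longrightarrow> \<exists>d. (g has_real_derivative d) (at t) \<and> d \<le> M"
  shows "g 1 - g 0 \<le> M"
proof (rule field_le_epsilon)
  fix \<epsilon> :: real assume "0 < \<epsilon>"
  show "g 1 - g 0 \<le> M + \<epsilon>"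
  proof (rule ccontr)
    assume too_large: "\<not> ?thesis"
    define h where "h t = g t - (M + \<epsilon>) * t" for t
    have "h 0 < h 1" using too_large by (simp add: h_def)
    have h_lip: "(B + \<bar>M + \<epsilon>\<bar>)-lipschitz_on {0..1} h"
      using lipschitz_on_diff[OF lip lipschitz_on_cmult_real[OF lipschitz_on_id, of "M + \<epsilon>"]]
      by (simp add: h_def[abs_def])
    define N' where "N' = (N \<union> {0}) \<inter> {0..1}"
    have "negligible N'" unfolding N'_def using N by (auto intro: negligible_Int)
    have "negligible (h ` N')"
    proof (rule negligible_locally_Lipschitz_image[OF _ \<open>negligible N'\<close>])
      fix x assume "x \<in> N'"
      moreover have "N' \<subseteq> {0..1}" by (auto simp: N'_def)
      ultimately have "\<forall>y\<in>N' \<inter> UNIV. norm (h y - h x) \<le> (B + \<bar>M + \<epsilon>\<bar>) * norm (y - x)"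
        unfolding dist_norm[symmetric] using lipschitz_onD[OF h_lip] by blast
      then show "\<exists>T C. open T \<and> x \<in> T \<and> (\<forall>y\<in>N' \<inter> T. norm (h y - h x) \<le> C * norm (y - x))"
        by blast
    qed simp
    moreover have "\<not> negligible {h 0<..<h 1}"
      using \<open>h 0 < h 1\<close> negligible_interval(2)[of "h 0" "h 1"] by (simp add: box_real(1))
    ultimately obtain c where c: "c \<in> {h 0<..<h 1}" "c \<notin> h ` N'"
      using negligible_subset by blast
    obtain \<tau> where \<tau>: "0 \<le> \<tau>" "\<tau> < 1" "h \<tau> = c" and above: "\<And>t. \<tau> < t \<Longrightarrow> t \<le> 1 \<Longrightarrow> c < h t"
      using last_level_crossing[of h c] lipschitz_on_continuous_on[OF h_lip] c(1) by auto
    have "\<tau> \<in> {0..1} - N" using \<tau> c(2) by (auto simp: N'_def)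
    then obtain d where d: "(g has_real_derivative d) (at \<tau>)" "d \<le> M" using der by blast
    have "(h has_real_derivative (d - (M + \<epsilon>))) (at \<tau>)"
      unfolding h_def using d(1) by (auto intro!: derivative_eq_intros)
    moreover have "d - (M + \<epsilon>) < 0" using d \<open>0 < \<epsilon>\<close> by simp
    ultimately obtain \<delta> where \<delta>: "0 < \<delta>" "\<And>e. 0 < e \<Longrightarrow> e < \<delta> \<Longrightarrow> h (\<tau> + e) < h \<tau>"
      using DERIV_neg_dec_right by blast
    define e where "e = min (\<delta> / 2) ((1 - \<tau>) / 2)"
    have "0 < e" "e < \<delta>" "\<tau> + e \<le> 1" using \<delta> \<tau> by (auto simp: e_def min_def field_simps)
    then show False using \<delta>(2)[of e] above[of "\<tau> + e"] \<tau>(3) by auto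
  qed
qed

lemma abs_increment_le_of_ae_derivative_bound:
  fixes g :: "real \<Rightarrow> real"
  assumes lip: "B-lipschitz_on {0..1} g" and N: "negligible N"
    and der: "\<And>t. t \<in> {0..1} - N \<Longrightarrow> \<exists>d. (g has_real_derivative d) (at t) \<and> \<bar>d\<bar> \<le> M"
  shows "\<bar>g 1 - g 0\<bar> \<le> M"
proof -
  have "g 1 - g 0 \<le> M"
    by (rule increment_le_of_ae_derivative_le[OF lip N]) (use der in fastforce)
  moreover have "(- g 1) - (- g 0) \<le> M"
  proof (rule increment_le_of_ae_derivative_le[OF _ N])
    show "B-lipschitz_on {0..1} (\<lambda>t. - g t)"
      using lip by simp
    fix t assume "t \<in> {0..1} - N"
    then obtain d where "(g has_real_derivative d) (at t)" "\<bar>d\<bar> \<le> M" using der by blast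
    then show "\<exists>d. ((\<lambda>t. - g t) has_real_derivative d) (at t) \<and> d \<le> M"
      by (intro exI[of _ "-d"]) (auto intro!: derivative_eq_intros)
  qed
  ultimately show ?thesis by linarith
qed

lemma has_real_derivative_along_line:
  fixes V :: "'a::real_normed_vector \<Rightarrow> real"
  assumes "(V has_derivative D) (at (a + t *\<^sub>R v))"
  shows "((\<lambda>t. V (a + t *\<^sub>R v)) has_real_derivative D v) (at t)"
proof -
  have "linear D" using assms has_derivative_linear by blast
  have "((\<lambda>t. a + t *\<^sub>R v) has_derivative (\<lambda>h. h *\<^sub>R v)) (at t)"
    by (auto intro!: derivative_eq_intros)
  from diff_chain_at[OF this assms]
  have "((\<lambda>t. V (a + t *\<^sub>R v)) has_derivative (\<lambda>h. h * D v)) (at t)"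
    using linear_scale[OF \<open>linear D\<close>] by (simp add: o_def)
  then show ?thesis by (simp add: has_field_derivative_def mult.commute[of _ "D v"])
qed

text \<open>By Tonelli, almost every translate of a segment meets a null set \<open>N\<close> only at a null set
  of parameters.\<close>

lemma AE_translated_segment_avoids:
  fixes N :: "'a::euclidean_space set" and a v :: 'a
  assumes N: "N \<in> null_sets lborel"
  shows "AE z in lborel. AE t in lborel. t \<in> {0..1} \<longrightarrow> a + z + t *\<^sub>R v \<notin> N"
proof -
  have product: "pair_sigma_finite (lborel :: 'a measure) (lborel :: real measure)"
    by unfold_locales
  have N_borel: "N \<in> sets borel" using N by auto
  define F :: "'a \<Rightarrow> real \<Rightarrow> ennreal"
    where "F z t = indicator N (a + z + t *\<^sub>R v) * indicator {0..1::real} t" for z t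
  have F_meas: "case_prod F \<in> borel_measurable (lborel \<Otimes>\<^sub>M lborel)"
    unfolding F_def using N_borel by measurable
  have section_null: "(\<integral>\<^sup>+ z. F z t \<partial>lborel) = 0" for t
  proof -
    have "(\<integral>\<^sup>+ z. F z t \<partial>lborel) = (\<integral>\<^sup>+ z. indicator N ((a + t *\<^sub>R v) + z) \<partial>lborel) * indicator {0..1::real} t"
      unfolding F_def by (subst nn_integral_multc) (use N_borel in \<open>auto simp: add_ac\<close>)
    also have "(\<integral>\<^sup>+ z. indicator N ((a + t *\<^sub>R v) + z) \<partial>lborel)
        = (\<integral>\<^sup>+ y. indicator N y \<partial>distr lborel borel ((+) (a + t *\<^sub>R v)))"
      using N_borel by (subst nn_integral_distr) auto
    also have "\<dots> = emeasure lborel N"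
      using N_borel by (simp add: lborel_distr_plus)
    finally show ?thesis using N by auto
  qed
  have "(\<integral>\<^sup>+ z. (\<integral>\<^sup>+ t. F z t \<partial>lborel) \<partial>lborel) = (\<integral>\<^sup>+ t. (\<integral>\<^sup>+ z. F z t \<partial>lborel) \<partial>lborel)"
    using pair_sigma_finite.Fubini'[OF product F_meas] by simp
  also have "\<dots> = 0" by (simp add: section_null)
  moreover have "(\<lambda>z. \<integral>\<^sup>+ t. F z t \<partial>lborel) \<in> borel_measurable lborel"
    using F_meas by measurable
  ultimately have "AE z in lborel. (\<integral>\<^sup>+ t. F z t \<partial>lborel) = 0"
    using nn_integral_0_iff_AE by fastforce
  moreover have "AE t in lborel. t \<in> {0..1} \<longrightarrow> a + z + t *\<^sub>R v \<notin> N"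
    if "(\<integral>\<^sup>+ t. F z t \<partial>lborel) = 0" for z
  proof -
    have "(\<lambda>t. F z t) \<in> borel_measurable lborel" unfolding F_def using N_borel by measurable
    then have "AE t in lborel. F z t = 0" using nn_integral_0_iff_AE that by blast
    then show ?thesis by eventually_elim (auto simp: F_def indicator_def split: if_splits)
  qed
  ultimately show ?thesis by (auto elim: AE_mp)
qed

lemma segment_increment_le_of_ae_derivative:
  fixes V :: "'a::euclidean_space \<Rightarrow> real"
  assumes lip: "L-lipschitz_on S V" and seg: "closed_segment a b \<subseteq> S"
    and avoid: "AE t in lborel. t \<in> {0..1} \<longrightarrow> a + t *\<^sub>R (b - a) \<notin> N"
    and der: "\<And>x. x \<in> S - N \<Longrightarrow> \<exists>D. (V has_derivative D) (at x) \<and> onorm D \<le> G"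
  shows "\<bar>V b - V a\<bar> \<le> G * norm (b - a)"
proof -
  define \<gamma> where "\<gamma> t = a + t *\<^sub>R (b - a)" for t
  have \<gamma>_S: "\<gamma> t \<in> S" if "t \<in> {0..1}" for t
    using seg that by (auto simp: \<gamma>_def closed_segment_def algebra_simps intro!: exI[of _ t])
  obtain N1 where N1: "{t \<in> space lborel. \<not> (t \<in> {0..1} \<longrightarrow> \<gamma> t \<notin> N)} \<subseteq> N1"
    "emeasure lborel N1 = 0" "N1 \<in> sets lborel"
    using avoid unfolding \<gamma>_def by (rule AE_E)
  have "negligible N1" using N1(2,3) by (auto simp: negligible_iff_null_sets intro!: null_sets_completionI)
  have "(L * norm (b - a))-lipschitz_on {0..1} (V \<circ> \<gamma>)"
  proof (rule lipschitz_onI)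
    fix s t :: real assume "s \<in> {0..1}" "t \<in> {0..1}"
    then have "dist (V (\<gamma> s)) (V (\<gamma> t)) \<le> L * dist (\<gamma> s) (\<gamma> t)"
      using lipschitz_onD[OF lip] \<gamma>_S by blast
    then show "dist ((V \<circ> \<gamma>) s) ((V \<circ> \<gamma>) t) \<le> L * norm (b - a) * dist s t"
      by (simp add: \<gamma>_def dist_norm scaleR_diff_left[symmetric] mult_ac)
  qed (use lipschitz_on_nonneg[OF lip] in simp)
  then have "\<bar>(V \<circ> \<gamma>) 1 - (V \<circ> \<gamma>) 0\<bar> \<le> G * norm (b - a)"
  proof (rule abs_increment_le_of_ae_derivative_bound[OF _ \<open>negligible N1\<close>])
    fix t assume "t \<in> {0..1} - N1"
    then have "\<gamma> t \<in> S - N" using N1(1) \<gamma>_S by auto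
    then obtain D where D: "(V has_derivative D) (at (\<gamma> t))" "onorm D \<le> G" using der by blast
    have "((V \<circ> \<gamma>) has_real_derivative D (b - a)) (at t)"
      using has_real_derivative_along_line[of V D a t "b - a"] D(1) by (simp add: \<gamma>_def o_def)
    moreover have "\<bar>D (b - a)\<bar> \<le> G * norm (b - a)"
    proof -
      have "\<bar>D (b - a)\<bar> \<le> onorm D * norm (b - a)"
        using onorm[OF has_derivative_bounded_linear[OF D(1)], of "b - a"] by simp
      also have "\<dots> \<le> G * norm (b - a)" by (rule mult_right_mono[OF D(2) norm_ge_zero])
      finally show ?thesis .
    qed
    ultimately show "\<exists>d. ((V \<circ> \<gamma>) has_real_derivative d) (at t) \<and> \<bar>d\<bar> \<le> G * norm (b - a)" by blast
  qed
  then show ?thesis by (simp add: \<gamma>_def)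
qed

text \<open>The derivative bound only holds off a null set, which the segment itself may lie in; the
  segment is therefore moved by a small \<open>z\<close> chosen so that the translate avoids the null set, and
  Lipschitz continuity controls the error of the translation.\<close>

lemma segment_increment_le_of_ae_derivative_approx:
  fixes V :: "'a::euclidean_space \<Rightarrow> real"
  assumes lip: "L-lipschitz_on \<Omega> V" and N: "N \<in> null_sets lborel"
    and der: "\<And>x. x \<in> \<Omega> - N \<Longrightarrow> \<exists>D. (V has_derivative D) (at x) \<and> onorm D \<le> G"
    and "0 < e" and nbhd: "(\<Union>x\<in>closed_segment a b. ball x e) \<subseteq> \<Omega>"
  shows "\<bar>V b - V a\<bar> \<le> G * norm (b - a) + 2 * L * e"
proof -
  have "0 \<le> L" using lip lipschitz_on_nonneg by blast
  obtain N0 where N0: "{z \<in> space lborel. \<not> (AE t in lborel. t \<in> {0..1} \<longrightarrow> a + z + t *\<^sub>R (b - a) \<notin> N)} \<subseteq> N0"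
    "emeasure lborel N0 = 0" "N0 \<in> sets lborel"
    using AE_translated_segment_avoids[OF N, of a "b - a"] by (rule AE_E)
  have "negligible N0" using N0(2,3) by (auto simp: negligible_iff_null_sets intro!: null_sets_completionI)
  then have "\<not> ball 0 e \<subseteq> N0"
    using open_not_negligible[of "ball (0::'a) e"] \<open>0 < e\<close> negligible_subset by auto
  then obtain z where "z \<in> ball 0 e" "z \<notin> N0" by blast
  then have z: "norm z < e" "AE t in lborel. t \<in> {0..1} \<longrightarrow> a + z + t *\<^sub>R (b - a) \<notin> N"
    using N0(1) by auto
  then have avoid: "AE t in lborel. t \<in> {0..1} \<longrightarrow> (a + z) + t *\<^sub>R ((b + z) - (a + z)) \<notin> N"
    by simp
  have "x + z \<in> \<Omega>" if "x \<in> closed_segment a b" for x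
    using that nbhd z(1) by (force simp: dist_norm)
  then have moved_segment: "closed_segment (a + z) (b + z) \<subseteq> \<Omega>"
    using closed_segment_translation[of z a b] by (auto simp: add.commute)
  then have moved: "\<bar>V (b + z) - V (a + z)\<bar> \<le> G * norm (b - a)"
    using segment_increment_le_of_ae_derivative[OF lip _ avoid der] by simp
  have shift: "\<bar>V (x + z) - V x\<bar> \<le> L * e" if "x \<in> {a, b}" for x
  proof -
    have "x \<in> \<Omega>"
      using that nbhd centre_in_ball[of _ e] \<open>0 < e\<close> ends_in_segment[of a b] by blast
    moreover have "x + z \<in> \<Omega>" using that moved_segment by auto
    ultimately have "dist (V (x + z)) (V x) \<le> L * dist (x + z) x" using lipschitz_onD[OF lip] by blast
    also have "\<dots> \<le> L * e" using z(1) \<open>0 \<le> L\<close> by (simp add: dist_norm mult_left_mono)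
    finally show ?thesis by (simp add: dist_real_def)
  qed
  show ?thesis using moved shift[of a, simplified] shift[of b, simplified] by linarith
qed

lemma lipschitz_segment_bound_of_ae_derivative:
  fixes V :: "'a::euclidean_space \<Rightarrow> real"
  assumes "open \<Omega>" and lip: "L-lipschitz_on \<Omega> V" and N: "N \<in> null_sets lborel"
    and der: "\<And>x. x \<in> \<Omega> - N \<Longrightarrow> \<exists>D. (V has_derivative D) (at x) \<and> onorm D \<le> G"
    and seg: "closed_segment a b \<subseteq> \<Omega>"
  shows "\<bar>V b - V a\<bar> \<le> G * norm (b - a)"
proof (rule field_le_epsilon)
  fix \<epsilon> :: real assume "0 < \<epsilon>"
  obtain \<delta> where \<delta>: "0 < \<delta>" "(\<Union>x\<in>closed_segment a b. ball x \<delta>) \<subseteq> \<Omega>"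
    using compact_subset_open_imp_ball_epsilon_subset[OF compact_segment \<open>open \<Omega>\<close> seg] by blast
  have "0 \<le> L" using lip lipschitz_on_nonneg by blast
  define e where "e = min \<delta> (\<epsilon> / (2 * L + 1))"
  have "0 < e" using \<delta> \<open>0 < \<epsilon>\<close> \<open>0 \<le> L\<close> by (auto simp: e_def)
  moreover have "(\<Union>x\<in>closed_segment a b. ball x e) \<subseteq> \<Omega>" using \<delta>(2) by (force simp: e_def)
  ultimately have "\<bar>V b - V a\<bar> \<le> G * norm (b - a) + 2 * L * e"
    using segment_increment_le_of_ae_derivative_approx[OF lip N der] by blast
  moreover have "e \<le> \<epsilon> / (2 * L + 1)" by (simp add: e_def)
  then have "(2 * L + 1) * e \<le> \<epsilon>" using \<open>0 \<le> L\<close> by (simp add: field_simps)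
  then have "2 * L * e \<le> \<epsilon>" using \<open>0 < e\<close> by (simp add: algebra_simps)
  ultimately show "\<bar>V b - V a\<bar> \<le> G * norm (b - a) + \<epsilon>" by linarith
qed

section \<open>Meshes and lumping regions\<close>

lemma negligible_frontier_polyhedral_cell:
  assumes "polyhedral_cell K"
  shows "negligible (frontier K)"
proof -
  obtain P where P: "finite P" "\<forall>Q\<in>P. polytope Q" "closure K = \<Union>P" and "open K"
    and K: "K = interior (closure K)"
    using assms by (auto simp: polyhedral_cell_def polyhedral_open_def)
  have "frontier K \<subseteq> (\<Union>Q\<in>P. frontier Q)"
  proof
    fix x assume "x \<in> frontier K"
    then have "x \<in> closure K" "x \<notin> K" using \<open>open K\<close> by (auto simp: frontier_def interior_open)
    then obtain Q where Q: "Q \<in> P" "x \<in> Q" using P(3) by auto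
    then have "interior Q \<subseteq> K" using P(3) K interior_mono[of Q "closure K"] by auto
    then have "x \<in> frontier Q" using Q(2) \<open>x \<notin> K\<close> closure_subset[of Q] by (auto simp: frontier_def)
    then show "x \<in> (\<Union>Q\<in>P. frontier Q)" using Q(1) by auto
  qed
  moreover have "negligible (\<Union>Q\<in>P. frontier Q)"
    using P(1,2) by (intro negligible_Union) (auto intro!: negligible_convex_frontier polytope_imp_convex)
  ultimately show ?thesis using negligible_subset by blast
qed

locale lumped_mesh =
  fixes \<Omega> :: "'a::euclidean_space set" and \<M> :: "'a set set" and xc :: "'a set \<Rightarrow> 'a"
    and Vt :: "'a set" and VK :: "'a set \<Rightarrow> 'a set" and \<T> :: "'a set set"
    and \<alpha> :: "'a set \<Rightarrow> 'a \<Rightarrow> real" and \<omega>K :: "'a set \<Rightarrow> 'a set" and \<omega>Ks :: "'a set \<Rightarrow> 'a \<Rightarrow> 'a set"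
  assumes finite_cells: "finite \<M>"
    and cells_nonempty: "\<M> \<noteq> {}"
    and cell_polyhedral: "\<And>K. K \<in> \<M> \<Longrightarrow> polyhedral_cell K"
    and cell_subset: "\<And>K. K \<in> \<M> \<Longrightarrow> K \<subseteq> \<Omega>"
    and cell_star_shaped: "\<And>K. K \<in> \<M> \<Longrightarrow> star_shaped_wrt K (xc K)"
    and cells_disjoint: "\<And>K L. K \<in> \<M> \<Longrightarrow> L \<in> \<M> \<Longrightarrow> K \<noteq> L \<Longrightarrow> K \<inter> L = {}"
    and closure_cells_cover: "\<Union>(closure ` \<M>) = closure \<Omega>"
    and finite_vertices: "finite Vt"
    and vertices_eq: "Vt = \<Union>(VK ` \<M>)"
    and vertices_in_frontier: "\<And>K. K \<in> \<M> \<Longrightarrow> VK K \<subseteq> frontier K"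
    and finite_submesh: "finite \<T>"
    and submesh_simplex: "\<And>T. T \<in> \<T> \<Longrightarrow> int DIM('a) simplex T"
    and submesh_in_cell: "\<And>T. T \<in> \<T> \<Longrightarrow> \<exists>K\<in>\<M>. T \<subseteq> closure K \<and> xc K extreme_point_of T"
    and closure_cell_eq_submesh: "\<And>K. K \<in> \<M> \<Longrightarrow> closure K = \<Union>{T\<in>\<T>. T \<subseteq> closure K}"
    and cell_mass_pos: "\<And>K. K \<in> \<M> \<Longrightarrow> 0 < mC VK \<alpha> K"
    and vertex_mass_pos: "\<And>s. s \<in> Vt \<Longrightarrow> 0 < mV \<M> VK \<alpha> s"
    and omegaK: "\<And>K. K \<in> \<M> \<Longrightarrow> open (\<omega>K K) \<and> \<omega>K K \<subseteq> K \<and> measure lebesgue (\<omega>K K) = mC VK \<alpha> K"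
    and omegaKs: "\<And>K s. K \<in> \<M> \<Longrightarrow> s \<in> VK K \<Longrightarrow> open (\<omega>Ks K s) \<and> \<omega>Ks K s \<subseteq> K \<and>
       measure lebesgue (\<omega>Ks K s) = mKs \<alpha> K s \<and> \<omega>K K \<inter> \<omega>Ks K s = {}"
    and omegaKs_disjoint: "\<And>K s s'. K \<in> \<M> \<Longrightarrow> s \<in> VK K \<Longrightarrow> s' \<in> VK K \<Longrightarrow> s \<noteq> s' \<Longrightarrow> \<omega>Ks K s \<inter> \<omega>Ks K s' = {}"

lemma discretization_imp_lumped_mesh:
  assumes "discretization \<Omega> \<M> xc Vt VK \<T> \<alpha> \<omega>K \<omega>Ks"
  shows "lumped_mesh \<Omega> \<M> xc Vt VK \<T> \<alpha> \<omega>K \<omega>Ks"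
proof -
  obtain "finite \<M>" "\<M> \<noteq> {}"
    and cells: "\<forall>K\<in>\<M>. polyhedral_cell K \<and> K \<subseteq> \<Omega> \<and> star_shaped_wrt K (xc K)"
    and disjoint: "\<forall>K\<in>\<M>. \<forall>L\<in>\<M>. K \<noteq> L \<longrightarrow> K \<inter> L = {}"
    and "\<Union>(closure ` \<M>) = closure \<Omega>" "finite Vt" "Vt = \<Union>(VK ` \<M>)"
    and frontier: "\<forall>K\<in>\<M>. VK K \<subseteq> frontier K"
    and "finite \<T>"
    and simplices: "\<forall>T\<in>\<T>. int DIM('a) simplex T"
    and "\<forall>T\<in>\<T>. \<forall>T'\<in>\<T>. T \<noteq> T' \<longrightarrow> interior T \<inter> interior T' = {}"
    and submesh: "\<forall>T\<in>\<T>. \<exists>K\<in>\<M>. T \<subseteq> closure K \<and> xc K extreme_point_of T \<and>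
        convex hull {v. v extreme_point_of T \<and> v \<noteq> xc K} \<subseteq> frontier K"
    and closures: "\<forall>K\<in>\<M>. closure K = \<Union>{T\<in>\<T>. T \<subseteq> closure K}"
    and "\<forall>K\<in>\<M>. \<forall>s\<in>VK K. \<exists>T\<in>\<T>. T \<subseteq> closure K \<and> s extreme_point_of T"
    and "\<forall>K\<in>\<M>. (\<forall>s\<in>VK K. \<alpha> K s \<ge> 0) \<and> (\<Sum>s\<in>VK K. \<alpha> K s) \<le> 1"
    and "\<forall>K\<in>\<M>. \<forall>s\<in>VK K. mKs \<alpha> K s > 0"
    and vertex_mass: "\<forall>s\<in>Vt. mV \<M> VK \<alpha> s > 0"
    and cell_mass: "\<forall>K\<in>\<M>. mC VK \<alpha> K > 0"
    and lumping: "\<forall>K\<in>\<M>. open (\<omega>K K) \<and> \<omega>K K \<subseteq> K \<and> measure lebesgue (\<omega>K K) = mC VK \<alpha> K \<and>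
        (\<forall>s\<in>VK K. open (\<omega>Ks K s) \<and> \<omega>Ks K s \<subseteq> K \<and>
                   measure lebesgue (\<omega>Ks K s) = mKs \<alpha> K s \<and> \<omega>K K \<inter> \<omega>Ks K s = {}) \<and>
        (\<forall>s\<in>VK K. \<forall>s'\<in>VK K. s \<noteq> s' \<longrightarrow> \<omega>Ks K s \<inter> \<omega>Ks K s' = {}) \<and>
        closure K = closure (\<omega>K K) \<union> (\<Union>s\<in>VK K. closure (\<omega>Ks K s))"
    using assms unfolding discretization_def by (elim conjE) blast
  show ?thesis
  proof
    show "finite \<M>" "\<M> \<noteq> {}" "\<Union>(closure ` \<M>) = closure \<Omega>" "finite Vt" "Vt = \<Union>(VK ` \<M>)" "finite \<T>"
      by fact+
    show "\<And>K. K \<in> \<M> \<Longrightarrow> polyhedral_cell K" "\<And>K. K \<in> \<M> \<Longrightarrow> K \<subseteq> \<Omega>"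
      "\<And>K. K \<in> \<M> \<Longrightarrow> star_shaped_wrt K (xc K)"
      using cells by blast+
    show "\<And>K L. K \<in> \<M> \<Longrightarrow> L \<in> \<M> \<Longrightarrow> K \<noteq> L \<Longrightarrow> K \<inter> L = {}" using disjoint by blast
    show "\<And>K. K \<in> \<M> \<Longrightarrow> VK K \<subseteq> frontier K" using frontier by blast
    show "\<And>T. T \<in> \<T> \<Longrightarrow> int DIM('a) simplex T" using simplices by blast
    show "\<And>T. T \<in> \<T> \<Longrightarrow> \<exists>K\<in>\<M>. T \<subseteq> closure K \<and> xc K extreme_point_of T" using submesh by blast
    show "\<And>K. K \<in> \<M> \<Longrightarrow> closure K = \<Union>{T\<in>\<T>. T \<subseteq> closure K}" using closures by blast
    show "\<And>K. K \<in> \<M> \<Longrightarrow> 0 < mC VK \<alpha> K" using cell_mass by blast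
    show "\<And>s. s \<in> Vt \<Longrightarrow> 0 < mV \<M> VK \<alpha> s" using vertex_mass by blast
    show "\<And>K. K \<in> \<M> \<Longrightarrow> open (\<omega>K K) \<and> \<omega>K K \<subseteq> K \<and> measure lebesgue (\<omega>K K) = mC VK \<alpha> K"
      using lumping by blast
    show "\<And>K s. K \<in> \<M> \<Longrightarrow> s \<in> VK K \<Longrightarrow> open (\<omega>Ks K s) \<and> \<omega>Ks K s \<subseteq> K \<and>
       measure lebesgue (\<omega>Ks K s) = mKs \<alpha> K s \<and> \<omega>K K \<inter> \<omega>Ks K s = {}"
      using lumping by blast
    show "\<And>K s s'. K \<in> \<M> \<Longrightarrow> s \<in> VK K \<Longrightarrow> s' \<in> VK K \<Longrightarrow> s \<noteq> s' \<Longrightarrow> \<omega>Ks K s \<inter> \<omega>Ks K s' = {}"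
      using lumping by blast
  qed
qed

context lumped_mesh
begin

lemma cell_open: "K \<in> \<M> \<Longrightarrow> open K"
  using cell_polyhedral by (simp add: polyhedral_cell_def polyhedral_open_def)

lemma vertices_of_cell: "K \<in> \<M> \<Longrightarrow> VK K \<subseteq> Vt"
  using vertices_eq by blast

lemma center_in_cell: "K \<in> \<M> \<Longrightarrow> xc K \<in> K"
  using cell_star_shaped by (simp add: star_shaped_wrt_def)

text \<open>Every point of a cell lies in a simplex of the submesh that also contains the centre, since the
  simplices of \<open>\<T>\<close> covering a cell belong to that cell and have its centre as a vertex.\<close>

lemma submesh_simplex_through_center:
  assumes K: "K \<in> \<M>" and x: "x \<in> K"
  obtains T where "T \<in> \<T>" "x \<in> T" "xc K \<in> T"
proof -
  obtain T where T: "T \<in> \<T>" "T \<subseteq> closure K" "x \<in> T"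
    using closure_cell_eq_submesh[OF K] x closure_subset by blast
  obtain K' where K': "K' \<in> \<M>" "T \<subseteq> closure K'" "xc K' extreme_point_of T"
    using submesh_in_cell[OF T(1)] by blast
  have "K \<inter> closure K' \<noteq> {}" using x T(3) K'(2) by blast
  then have "K' = K"
    using cells_disjoint[OF K K'(1)] open_Int_closure_eq_empty[OF cell_open[OF K]] by blast
  then show thesis using that T K' by (auto simp: extreme_point_of_def)
qed

lemma submesh_nonempty: "\<T> \<noteq> {}"
proof -
  obtain K where K: "K \<in> \<M>" using cells_nonempty by blast
  then obtain T where "T \<in> \<T>" "xc K \<in> T"
    using submesh_simplex_through_center[OF K center_in_cell[OF K]] by blast
  then show ?thesis by blast
qed

lemma diameter_le_h_mesh: "T \<in> \<T> \<Longrightarrow> diameter T \<le> h_mesh \<T>"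
  unfolding h_mesh_def using finite_submesh by (intro Max_ge) auto

lemma h_mesh_nonneg: "0 \<le> h_mesh \<T>"
proof -
  obtain T where "T \<in> \<T>" using submesh_nonempty by blast
  then show ?thesis
    using diameter_le_h_mesh diameter_ge_0[OF compact_imp_bounded[OF compact_simplex[OF submesh_simplex]]]
    by (meson order_trans)
qed

lemma h_mesh_le_diameter:
  assumes "bounded \<Omega>"
  shows "h_mesh \<T> \<le> diameter \<Omega>"
proof -
  have "h_mesh \<T> \<in> diameter ` \<T>"
    unfolding h_mesh_def using finite_submesh submesh_nonempty by (intro Max_in) auto
  then obtain T where T: "T \<in> \<T>" "h_mesh \<T> = diameter T" by auto
  obtain K where K: "K \<in> \<M>" "T \<subseteq> closure K" using submesh_in_cell[OF T(1)] by blast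
  then have "T \<subseteq> closure \<Omega>" using closure_mono[OF cell_subset[OF K(1)]] by blast
  then have "diameter T \<le> diameter (closure \<Omega>)"
    using assms by (intro diameter_subset) auto
  then show ?thesis using T(2) diameter_closure[OF assms] by simp
qed

lemma dist_center_le_h_mesh:
  assumes K: "K \<in> \<M>" and x: "x \<in> K"
  shows "dist x (xc K) \<le> h_mesh \<T>"
proof -
  obtain T where T: "T \<in> \<T>" "x \<in> T" "xc K \<in> T"
    by (rule submesh_simplex_through_center[OF K x])
  have "bounded T" using compact_simplex[OF submesh_simplex[OF T(1)]] by (rule compact_imp_bounded)
  then have "dist x (xc K) \<le> diameter T" using T(2,3) by (rule diameter_bounded_bound)
  also have "\<dots> \<le> h_mesh \<T>" by (rule diameter_le_h_mesh[OF T(1)])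
  finally show ?thesis .
qed

text \<open>Along the segment from the centre inside the star-shaped cell, and then by continuity on
  its closure.\<close>

lemma V_center_bound:
  fixes V :: "'a \<Rightarrow> real"
  assumes "open \<Omega>" and lip: "L-lipschitz_on (closure \<Omega>) V" and N: "N \<in> null_sets lborel"
    and der: "\<And>x. x \<in> \<Omega> - N \<Longrightarrow> \<exists>D. (V has_derivative D) (at x) \<and> onorm D \<le> G"
    and "0 \<le> G" and K: "K \<in> \<M>" and x: "x \<in> closure K"
  shows "\<bar>V x - V (xc K)\<bar> \<le> G * h_mesh \<T>"
proof -
  have lip\<Omega>: "L-lipschitz_on \<Omega> V" using lip lipschitz_on_subset closure_subset by blast
  have in_cell: "\<bar>V y - V (xc K)\<bar> \<le> G * h_mesh \<T>" if "y \<in> K" for y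
  proof -
    have "closed_segment (xc K) y \<subseteq> \<Omega>"
      using cell_star_shaped[OF K] cell_subset[OF K] that by (auto simp: star_shaped_wrt_def)
    then have "\<bar>V y - V (xc K)\<bar> \<le> G * norm (y - xc K)"
      using lipschitz_segment_bound_of_ae_derivative[OF \<open>open \<Omega>\<close> lip\<Omega> N der] by blast
    also have "\<dots> \<le> G * h_mesh \<T>"
      using dist_center_le_h_mesh[OF K that] \<open>0 \<le> G\<close> by (simp add: dist_norm mult_left_mono)
    finally show ?thesis .
  qed
  define S where "S = closure \<Omega> \<inter> (\<lambda>y. \<bar>V y - V (xc K)\<bar>) -` {..G * h_mesh \<T>}"
  have "continuous_on (closure \<Omega>) (\<lambda>y. \<bar>V y - V (xc K)\<bar>)"
    using lipschitz_on_continuous_on[OF lip] by (intro continuous_intros)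
  then have "closed S" unfolding S_def by (rule continuous_closed_preimage[OF _ closed_closure closed_atMost])
  moreover have "K \<subseteq> S"
    unfolding S_def using in_cell cell_subset[OF K] closure_subset by fastforce
  ultimately have "closure K \<subseteq> S" by (rule closure_minimal[rotated])
  then show ?thesis using x by (auto simp: S_def)
qed

end

lemma lmeasurable_finite: "A \<in> lmeasurable \<Longrightarrow> emeasure lebesgue A \<noteq> \<infinity>"
  unfolding infinity_ennreal_def by (rule fmeasurableD2)

context lumped_mesh
begin

text \<open>The lumping regions \<open>\<omega>\<^sub>K\<close> and \<open>\<omega>\<^sub>s\<close>, indexed by \<open>Inl K\<close> and \<open>Inr s\<close>.\<close>

definition region_index :: "('a set + 'a) set" where
  "region_index = Inl ` \<M> \<union> Inr ` Vt"

definition region :: "'a set + 'a \<Rightarrow> 'a set" where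
  "region = case_sum \<omega>K (omega_v \<M> VK \<omega>Ks)"

lemma finite_region_index: "finite region_index"
  unfolding region_index_def using finite_cells finite_vertices by simp

lemma piD_eq_sum_regions:
  "piD \<M> Vt VK \<omega>K \<omega>Ks vK vs x = (\<Sum>i\<in>region_index. case_sum vK vs i * indicator (region i) x)"
proof -
  have "(\<Sum>i\<in>region_index. case_sum vK vs i * indicator (region i) x)
      = (\<Sum>i\<in>Inl ` \<M>. case_sum vK vs i * indicator (region i) x)
        + (\<Sum>i\<in>Inr ` Vt. case_sum vK vs i * indicator (region i) x)"
    unfolding region_index_def using finite_cells finite_vertices by (intro sum.union_disjoint) auto
  then show ?thesis by (simp add: piD_def sum.reindex region_def)
qed

lemma mem_omega_v: "x \<in> omega_v \<M> VK \<omega>Ks s \<longleftrightarrow> (\<exists>K\<in>\<M>. s \<in> VK K \<and> x \<in> \<omega>Ks K s)"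
  by (auto simp: omega_v_def cells_of_def)

lemma region_subset_cell:
  assumes "x \<in> region i" "i \<in> region_index"
  obtains K where "K \<in> \<M>" "x \<in> K"
    "i = Inl K \<and> x \<in> \<omega>K K \<or> (\<exists>s\<in>VK K. i = Inr s \<and> x \<in> \<omega>Ks K s)"
proof (cases i)
  case (Inl K)
  then have "K \<in> \<M>" "x \<in> \<omega>K K" using assms by (auto simp: region_index_def region_def)
  then show thesis using that omegaK Inl by blast
next
  case (Inr s)
  then obtain K where "K \<in> \<M>" "s \<in> VK K" "x \<in> \<omega>Ks K s"
    using assms(1) by (auto simp: region_def mem_omega_v)
  then show thesis using that omegaKs Inr by blast
qed

lemma region_subset:
  assumes "i \<in> region_index"
  shows "region i \<subseteq> \<Omega>"
proof
  fix x assume "x \<in> region i"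
  then obtain K where "K \<in> \<M>" "x \<in> K"
    using region_subset_cell[OF _ assms] by blast
  then show "x \<in> \<Omega>" using cell_subset by blast
qed

lemma region_open: "i \<in> region_index \<Longrightarrow> open (region i)"
  using omegaK omegaKs
  by (auto simp: region_index_def region_def omega_v_def cells_of_def intro!: open_UN)

lemma regions_disjoint:
  assumes "i \<in> region_index" "j \<in> region_index" "i \<noteq> j"
  shows "region i \<inter> region j = {}"
proof (rule ccontr)
  assume "region i \<inter> region j \<noteq> {}"
  then obtain x where x: "x \<in> region i" "x \<in> region j" by blast
  obtain K where K: "K \<in> \<M>" "x \<in> K"
    "i = Inl K \<and> x \<in> \<omega>K K \<or> (\<exists>s\<in>VK K. i = Inr s \<and> x \<in> \<omega>Ks K s)"
    using region_subset_cell[OF x(1) assms(1)] .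
  obtain L where L: "L \<in> \<M>" "x \<in> L"
    "j = Inl L \<and> x \<in> \<omega>K L \<or> (\<exists>s\<in>VK L. j = Inr s \<and> x \<in> \<omega>Ks L s)"
    using region_subset_cell[OF x(2) assms(2)] .
  have "L = K" using cells_disjoint K L by blast
  moreover have "\<omega>K K \<inter> \<omega>Ks K s = {}" if "s \<in> VK K" for s
    using omegaKs[OF K(1) that] by blast
  ultimately show False
    using K(3) L(3) assms(3) omegaKs_disjoint[OF K(1)] by blast
qed

context
  assumes "bounded \<Omega>"
begin

lemma open_subset_lmeasurable: "open A \<Longrightarrow> A \<subseteq> \<Omega> \<Longrightarrow> A \<in> lmeasurable"
  using \<open>bounded \<Omega>\<close> bounded_subset lmeasurable_open by blast

lemma region_lmeasurable: "i \<in> region_index \<Longrightarrow> region i \<in> lmeasurable"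
  by (rule open_subset_lmeasurable[OF region_open region_subset])

lemma measure_omega_v: "s \<in> Vt \<Longrightarrow> measure lebesgue (omega_v \<M> VK \<omega>Ks s) = mV \<M> VK \<alpha> s"
proof -
  have cells: "K \<in> \<M>" "s \<in> VK K" if "K \<in> cells_of \<M> VK s" for K
    using that by (auto simp: cells_of_def)
  have finite: "finite (cells_of \<M> VK s)"
    using finite_cells by (auto simp: cells_of_def)
  have lmeas: "\<omega>Ks K s \<in> lmeasurable" if "K \<in> cells_of \<M> VK s" for K
    using omegaKs[OF cells[OF that]] cell_subset[OF cells(1)[OF that]]
    by (intro open_subset_lmeasurable) auto
  have disjoint: "disjoint_family_on (\<lambda>K. \<omega>Ks K s) (cells_of \<M> VK s)"
    unfolding disjoint_family_on_def
  proof (intro ballI impI)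
    fix K L assume "K \<in> cells_of \<M> VK s" "L \<in> cells_of \<M> VK s" "K \<noteq> L"
    then show "\<omega>Ks K s \<inter> \<omega>Ks L s = {}"
      using omegaKs[OF cells[of K]] omegaKs[OF cells[of L]] cells_disjoint[OF cells(1) cells(1)] by blast
  qed
  have "measure lebesgue (\<Union>K\<in>cells_of \<M> VK s. \<omega>Ks K s)
      = (\<Sum>K\<in>cells_of \<M> VK s. measure lebesgue (\<omega>Ks K s))"
  proof (rule measure_finite_Union[OF finite _ disjoint lmeasurable_finite[OF lmeas]])
    show "(\<lambda>K. \<omega>Ks K s) ` cells_of \<M> VK s \<subseteq> sets lebesgue" using lmeas by blast
  qed
  also have "\<dots> = (\<Sum>K\<in>cells_of \<M> VK s. mKs \<alpha> K s)"
  proof (rule sum.cong[OF refl])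
    fix K assume "K \<in> cells_of \<M> VK s"
    then show "measure lebesgue (\<omega>Ks K s) = mKs \<alpha> K s" using omegaKs[OF cells] by blast
  qed
  finally show ?thesis by (simp only: omega_v_def mV_def)
qed

lemma measure_region:
  "i \<in> region_index \<Longrightarrow> measure lebesgue (region i) = case_sum (mC VK \<alpha>) (mV \<M> VK \<alpha>) i"
  using omegaK measure_omega_v
  by (auto simp: region_index_def region_def simp del: measure_completion)

lemma region_measure_pos: "i \<in> region_index \<Longrightarrow> 0 < measure lebesgue (region i)"
  using measure_region cell_mass_pos vertex_mass_pos by (auto simp: region_index_def)

text \<open>The lumping parts of a cell exhaust its measure, so they cover it up to a null set.\<close>

lemma cell_minus_regions_null:
  assumes K: "K \<in> \<M>"
  shows "K - (\<omega>K K \<union> (\<Union>s\<in>VK K. \<omega>Ks K s)) \<in> null_sets lebesgue"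
proof -
  define B where "B = (\<Union>s\<in>VK K. \<omega>Ks K s)"
  have finite: "finite (VK K)" using vertices_of_cell[OF K] finite_vertices finite_subset by blast
  have lmeas: "A \<in> lmeasurable" if "open A" "A \<subseteq> K" for A
    using that cell_subset[OF K] by (intro open_subset_lmeasurable) auto
  have K_lmeas: "K \<in> lmeasurable" using lmeas cell_open[OF K] by blast
  have \<omega>K_lmeas: "\<omega>K K \<in> lmeasurable" using lmeas omegaK[OF K] by blast
  have \<omega>Ks_lmeas: "\<omega>Ks K s \<in> lmeasurable" if "s \<in> VK K" for s
    using lmeas omegaKs[OF K that] by blast
  have B_lmeas: "B \<in> lmeasurable"
    unfolding B_def using finite \<omega>Ks_lmeas by (intro fmeasurable.finite_UN) auto
  have "measure lebesgue B = (\<Sum>s\<in>VK K. measure lebesgue (\<omega>Ks K s))"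
    unfolding B_def
  proof (rule measure_finite_Union[OF finite])
    show "(\<lambda>s. \<omega>Ks K s) ` VK K \<subseteq> sets lebesgue" using \<omega>Ks_lmeas by blast
    show "disjoint_family_on (\<lambda>s. \<omega>Ks K s) (VK K)"
      using omegaKs_disjoint[OF K] by (auto simp: disjoint_family_on_def)
    show "emeasure lebesgue (\<omega>Ks K s) \<noteq> \<infinity>" if "s \<in> VK K" for s
      using \<omega>Ks_lmeas[OF that] by (rule lmeasurable_finite)
  qed
  also have "\<dots> = (\<Sum>s\<in>VK K. mKs \<alpha> K s)"
    by (rule sum.cong[OF refl]) (use omegaKs[OF K] in blast)
  finally have "measure lebesgue B = (\<Sum>s\<in>VK K. mKs \<alpha> K s)" .
  moreover have "\<omega>K K \<inter> B = {}" unfolding B_def using omegaKs[OF K] by blast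
  then have "measure lebesgue (\<omega>K K \<union> B) = measure lebesgue (\<omega>K K) + measure lebesgue B"
    using measure_Union[OF lmeasurable_finite[OF \<omega>K_lmeas] lmeasurable_finite[OF B_lmeas]
        fmeasurableD[OF \<omega>K_lmeas] fmeasurableD[OF B_lmeas]] by blast
  ultimately have "measure lebesgue (\<omega>K K \<union> B) = measure lebesgue K"
    using omegaK[OF K] by (simp add: mC_def del: measure_completion)
  moreover have "\<omega>K K \<union> B \<subseteq> K" unfolding B_def using omegaK[OF K] omegaKs[OF K] by blast
  moreover have union_sets: "\<omega>K K \<union> B \<in> sets lebesgue"
    using \<omega>K_lmeas B_lmeas by (intro sets.Un fmeasurableD)
  ultimately have "measure lebesgue (K - (\<omega>K K \<union> B)) = 0"
    using measurable_measure_Diff[OF K_lmeas] by simp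
  moreover have "K - (\<omega>K K \<union> B) \<in> lmeasurable"
    by (rule fmeasurable_Diff[OF K_lmeas union_sets])
  ultimately have "emeasure lebesgue (K - (\<omega>K K \<union> B)) = 0"
    by (simp add: emeasure_eq_measure2)
  then show ?thesis unfolding B_def[symmetric]
    by (rule null_setsI[OF _ fmeasurableD[OF \<open>K - (\<omega>K K \<union> B) \<in> lmeasurable\<close>]])
qed

lemma regions_cover:
  assumes "open \<Omega>"
  shows "\<Omega> - (\<Union>i\<in>region_index. region i) \<in> null_sets lebesgue"
proof -
  define Z where "Z = (\<Union>K\<in>\<M>. frontier K) \<union> (\<Union>K\<in>\<M>. K - (\<omega>K K \<union> (\<Union>s\<in>VK K. \<omega>Ks K s)))"
  have "\<Omega> - (\<Union>i\<in>region_index. region i) \<subseteq> Z"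
  proof
    fix x assume x: "x \<in> \<Omega> - (\<Union>i\<in>region_index. region i)"
    then obtain K where K: "K \<in> \<M>" "x \<in> closure K" using closure_cells_cover closure_subset by blast
    have outside: "x \<notin> region i" if "i \<in> region_index" for i
      using x that by blast
    have "x \<notin> \<omega>K K"
      using outside[of "Inl K"] K(1) by (simp add: region_index_def region_def)
    moreover have "x \<notin> \<omega>Ks K s" if "s \<in> VK K" for s
      using outside[of "Inr s"] K(1) that vertices_of_cell[OF K(1)]
      by (auto simp: region_index_def region_def mem_omega_v)
    ultimately show "x \<in> Z"
      using K cell_open[OF K(1)] unfolding Z_def by (cases "x \<in> K") (auto simp: frontier_def interior_open)
  qed
  moreover have "Z \<in> null_sets lebesgue" unfolding Z_def
    using negligible_frontier_polyhedral_cell[OF cell_polyhedral] cell_minus_regions_null finite_cells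
    by (intro null_sets.Un null_sets_UN') (auto simp: negligible_iff_null_sets intro: countable_finite)
  moreover have "\<Omega> - (\<Union>i\<in>region_index. region i) \<in> sets lebesgue"
    using assms region_open finite_region_index
    by (intro sets.Diff sets.finite_UN borel_open[THEN sets_completionI_sets]) auto
  ultimately show ?thesis using null_sets_subset by blast
qed

lemma lumping_partition_regions:
  assumes "open \<Omega>"
  shows "lumping_partition \<Omega> region_index region"
proof
  show "finite region_index" by (rule finite_region_index)
  show "\<And>i. i \<in> region_index \<Longrightarrow> region i \<in> sets lebesgue" using region_lmeasurable by blast
  show "\<And>i. i \<in> region_index \<Longrightarrow> region i \<subseteq> \<Omega>" by (rule region_subset)
  show "\<And>i. i \<in> region_index \<Longrightarrow> 0 < measure lebesgue (region i)" by (rule region_measure_pos)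
  show "\<And>i j. i \<in> region_index \<Longrightarrow> j \<in> region_index \<Longrightarrow> i \<noteq> j \<Longrightarrow> region i \<inter> region j = {}"
    by (rule regions_disjoint)
  show "\<Omega> - (\<Union>i\<in>region_index. region i) \<in> null_sets lebesgue" by (rule regions_cover[OF assms])
qed

end

end

section \<open>The energy estimate\<close>

lemma set_integrable_mult_continuous:
  fixes u V :: "'a::euclidean_space \<Rightarrow> real"
  assumes u: "set_integrable lebesgue S u" and "open S" "bounded S"
    and V: "continuous_on (closure S) V"
  shows "set_integrable lebesgue S (\<lambda>x. u x * V x)"
proof -
  obtain B where B: "\<And>x. x \<in> closure S \<Longrightarrow> \<bar>V x\<bar> \<le> B"
    using compact_continuous_image[OF V] \<open>bounded S\<close>
    by (metis bounded_real compact_closure compact_imp_bounded imageI)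
  have "(\<lambda>x. indicator S x *\<^sub>R V x) \<in> borel_measurable borel"
    using continuous_on_subset[OF V closure_subset] \<open>open S\<close>
    by (intro borel_measurable_continuous_on_indicator) auto
  then have VS_meas: "(\<lambda>x. indicator S x * V x) \<in> borel_measurable lebesgue"
    by (simp add: measurable_completion)
  have uS: "integrable lebesgue (\<lambda>x. indicator S x * u x)"
    using u by (simp add: set_integrable_def)
  have "integrable lebesgue (\<lambda>x. (indicator S x * u x) * (indicator S x * V x))"
  proof (rule Bochner_Integration.integrable_bound)
    show "integrable lebesgue (\<lambda>x. B * (indicator S x * u x))" using uS by simp
    show "(\<lambda>x. (indicator S x * u x) * (indicator S x * V x)) \<in> borel_measurable lebesgue"
      using borel_measurable_integrable[OF uS] VS_meas by measurable
    show "AE x in lebesgue. norm ((indicator S x * u x) * (indicator S x * V x))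
            \<le> norm (B * (indicator S x * u x))"
    proof (intro AE_I2)
      fix x
      have "\<bar>V x\<bar> * \<bar>u x\<bar> \<le> \<bar>B\<bar> * \<bar>u x\<bar>" if "x \<in> S"
        using B[of x] closure_subset that by (intro mult_right_mono) force+
      then show "norm ((indicator S x * u x) * (indicator S x * V x)) \<le> norm (B * (indicator S x * u x))"
        by (simp add: indicator_def abs_mult mult.commute)
    qed
  qed
  moreover have "(indicator S x * u x) * (indicator S x * V x) = indicator S x * (u x * V x)" for x
    by (simp add: indicator_def)
  ultimately show ?thesis by (simp add: set_integrable_def)
qed

lemma Energy_le_Energy_add:
  assumes "(\<integral>\<^sup>+x\<in>\<Omega>. e2ennreal (Gam p (u x)) \<partial>lebesgue) \<le> (\<integral>\<^sup>+x\<in>\<Omega>. e2ennreal (Gam p (u' x)) \<partial>lebesgue)"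
    and "(LINT x:\<Omega>|lebesgue. u x * V x) \<le> (LINT x:\<Omega>|lebesgue. u' x * V' x) + c"
  shows "Energy p \<Omega> V u \<le> Energy p \<Omega> V' u' + ereal c"
proof -
  have "enn2ereal (\<integral>\<^sup>+x\<in>\<Omega>. e2ennreal (Gam p (u x)) \<partial>lebesgue)
        \<le> enn2ereal (\<integral>\<^sup>+x\<in>\<Omega>. e2ennreal (Gam p (u' x)) \<partial>lebesgue)"
    using assms(1) by (simp add: less_eq_ennreal.rep_eq)
  moreover have "ereal (LINT x:\<Omega>|lebesgue. u x * V x) \<le> ereal (LINT x:\<Omega>|lebesgue. u' x * V' x) + ereal c"
    using assms(2) by simp
  ultimately have "Energy p \<Omega> V u
      \<le> enn2ereal (\<integral>\<^sup>+x\<in>\<Omega>. e2ennreal (Gam p (u' x)) \<partial>lebesgue)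
        + (ereal (LINT x:\<Omega>|lebesgue. u' x * V' x) + ereal c)"
    unfolding Energy_def by (rule add_mono)
  then show ?thesis unfolding Energy_def by (simp only: add.assoc)
qed

lemma Energy_less_infinity:
  assumes "(\<integral>\<^sup>+x\<in>\<Omega>. e2ennreal (Gam p (u x)) \<partial>lebesgue) < \<infinity>"
  shows "Energy p \<Omega> V u < \<infinity>"
proof -
  have "enn2ereal (\<integral>\<^sup>+x\<in>\<Omega>. e2ennreal (Gam p (u x)) \<partial>lebesgue) < \<infinity>"
    using assms by (simp add: less_ennreal.rep_eq)
  then show ?thesis unfolding Energy_def by simp
qed

context lumped_mesh
begin

definition cell_average :: "('a \<Rightarrow> real) \<Rightarrow> 'a set \<Rightarrow> real" where
  "cell_average u K = (LINT x:\<omega>K K|lebesgue. u x) / mC VK \<alpha> K"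

definition vertex_average :: "('a \<Rightarrow> real) \<Rightarrow> 'a \<Rightarrow> real" where
  "vertex_average u s = (LINT x:omega_v \<M> VK \<omega>Ks s|lebesgue. u x) / mV \<M> VK \<alpha> s"

context
  assumes bounded: "bounded \<Omega>" and open_domain: "open \<Omega>"
begin

interpretation regions: lumping_partition \<Omega> region_index region
  by (rule lumping_partition_regions[OF bounded open_domain])

lemma piD_eq_piecewise: "piD \<M> Vt VK \<omega>K \<omega>Ks vK vs = regions.piecewise (case_sum vK vs)"
  by (simp add: fun_eq_iff piD_eq_sum_regions regions.piecewise_def)

lemma piD_averages_eq_piecewise_mean:
  "piD \<M> Vt VK \<omega>K \<omega>Ks (cell_average u) (vertex_average u) = regions.piecewise (regions.mean u)"
proof -
  have "regions.mean u i = case_sum (cell_average u) (vertex_average u) i" if "i \<in> region_index" for i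
    using measure_region[OF bounded that] that unfolding regions.mean_def
    by (auto simp: cell_average_def vertex_average_def region_def region_index_def)
  then show ?thesis by (simp add: fun_eq_iff piD_eq_piecewise regions.piecewise_def)
qed

lemma Gam_piD_averages_le:
  assumes "admissible_p p" "set_integrable lebesgue \<Omega> u" "AE x in lebesgue. x \<in> \<Omega> \<longrightarrow> 0 \<le> u x"
  shows "(\<integral>\<^sup>+x\<in>\<Omega>. e2ennreal (Gam p (piD \<M> Vt VK \<omega>K \<omega>Ks (cell_average u) (vertex_average u) x)) \<partial>lebesgue)
         \<le> (\<integral>\<^sup>+x\<in>\<Omega>. e2ennreal (Gam p (u x)) \<partial>lebesgue)"
  unfolding piD_averages_eq_piecewise_mean by (rule regions.Gam_piecewise_mean_le[OF assms])

text \<open>A point of a lumping region lies in the closure of a cell \<open>K\<close>, and the value of \<open>\<pi>\<^sub>D V\<close> there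
  is \<open>V (x\<^sub>K)\<close> or \<open>V (x\<^sub>s)\<close> with \<open>x\<^sub>s \<in> \<partial>K\<close>; both are within \<open>G h\<^sub>T\<close> of \<open>V (x\<^sub>K)\<close>.\<close>

lemma piD_V_consistency:
  fixes V :: "'a \<Rightarrow> real"
  assumes lip: "L-lipschitz_on (closure \<Omega>) V" and N: "N \<in> null_sets lborel"
    and der: "\<And>x. x \<in> \<Omega> - N \<Longrightarrow> \<exists>D. (V has_derivative D) (at x) \<and> onorm D \<le> G" and "0 \<le> G"
    and i: "i \<in> region_index" and x: "x \<in> region i"
  shows "\<bar>case_sum (\<lambda>K. V (xc K)) V i - V x\<bar> \<le> 2 * G * h_mesh \<T>"
proof -
  have center: "\<bar>V y - V (xc K)\<bar> \<le> G * h_mesh \<T>" if "K \<in> \<M>" "y \<in> closure K" for K y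
    by (rule V_center_bound[OF open_domain lip N der \<open>0 \<le> G\<close> that])
  have "0 \<le> G * h_mesh \<T>" using \<open>0 \<le> G\<close> h_mesh_nonneg by simp
  obtain K where K: "K \<in> \<M>" "x \<in> K"
    and cases: "i = Inl K \<and> x \<in> \<omega>K K \<or> (\<exists>s\<in>VK K. i = Inr s \<and> x \<in> \<omega>Ks K s)"
    using region_subset_cell[OF x i] .
  have "\<bar>V x - V (xc K)\<bar> \<le> G * h_mesh \<T>" using center[OF K(1)] K(2) closure_subset by blast
  moreover have "\<bar>V s - V (xc K)\<bar> \<le> G * h_mesh \<T>" if "s \<in> VK K" for s
    using center[OF K(1)] vertices_in_frontier[OF K(1)] that by (auto simp: frontier_def)
  ultimately show ?thesis
    using cases \<open>0 \<le> G * h_mesh \<T>\<close> by (fastforce simp: abs_minus_commute)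
qed

lemma potential_piD_averages_le:
  fixes V :: "'a \<Rightarrow> real"
  assumes u: "set_integrable lebesgue \<Omega> u" and lip: "L-lipschitz_on (closure \<Omega>) V"
    and der: "AE x in lebesgue. x \<in> \<Omega> \<longrightarrow> (\<exists>D. (V has_derivative D) (at x) \<and> onorm D \<le> G)"
  shows "(LINT x:\<Omega>|lebesgue. piD \<M> Vt VK \<omega>K \<omega>Ks (cell_average u) (vertex_average u) x
                             * piD \<M> Vt VK \<omega>K \<omega>Ks (\<lambda>K. V (xc K)) V x)
         \<le> (LINT x:\<Omega>|lebesgue. u x * V x) + 2 * max G 0 * h_mesh \<T> * (LINT x:\<Omega>|lebesgue. \<bar>u x\<bar>)"
proof -
  define w where "w = case_sum (\<lambda>K. V (xc K)) V"
  have "AE x in lborel. x \<in> \<Omega> \<longrightarrow> (\<exists>D. (V has_derivative D) (at x) \<and> onorm D \<le> G)"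
    using der AE_completion_iff by blast
  then obtain N where N: "{x \<in> space lborel. \<not> (x \<in> \<Omega> \<longrightarrow> (\<exists>D. (V has_derivative D) (at x) \<and> onorm D \<le> G))} \<subseteq> N"
    "emeasure lborel N = 0" "N \<in> sets lborel" by (rule AE_E)
  have "N \<in> null_sets lborel" using N(2,3) by auto
  have der': "\<exists>D. (V has_derivative D) (at x) \<and> onorm D \<le> max G 0" if "x \<in> \<Omega> - N" for x
    using that N(1) by fastforce
  have "AE x\<in>\<Omega> in lebesgue. \<bar>regions.piecewise w x - V x\<bar> \<le> 2 * max G 0 * h_mesh \<T>"
    using regions.AE_in_piece
  proof eventually_elim
    case (elim x)
    show ?case
    proof
      assume "x \<in> \<Omega>"
      then obtain i where i: "i \<in> region_index" "x \<in> region i" using elim by blast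
      then show "\<bar>regions.piecewise w x - V x\<bar> \<le> 2 * max G 0 * h_mesh \<T>"
        using piD_V_consistency[OF lip \<open>N \<in> null_sets lborel\<close> der' _ i] regions.piecewise_eq[OF i, of w]
        by (simp add: w_def)
    qed
  qed
  moreover have "set_integrable lebesgue \<Omega> (\<lambda>x. u x * V x)"
    using u open_domain bounded lipschitz_on_continuous_on[OF lip] by (rule set_integrable_mult_continuous)
  ultimately have "(LINT x:\<Omega>|lebesgue. u x * regions.piecewise w x)
      \<le> (LINT x:\<Omega>|lebesgue. u x * V x) + 2 * max G 0 * h_mesh \<T> * (LINT x:\<Omega>|lebesgue. \<bar>u x\<bar>)"
    using u regions.set_integral_piecewise_mean_mult(1)[OF u]
    by (intro set_integral_mult_le_perturbation)
  then show ?thesis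
    by (simp add: piD_averages_eq_piecewise_mean piD_eq_piecewise[of "\<lambda>K. V (xc K)" V, folded w_def]
        regions.set_integral_piecewise_mean_mult(2)[OF u])
qed

lemma discrete_energy_le:
  assumes p: "admissible_p p"
    and u: "set_integrable lebesgue \<Omega> u" "AE x in lebesgue. x \<in> \<Omega> \<longrightarrow> 0 \<le> u x"
    and lip: "L-lipschitz_on (closure \<Omega>) V"
    and der: "AE x in lebesgue. x \<in> \<Omega> \<longrightarrow> (\<exists>D. (V has_derivative D) (at x) \<and> onorm D \<le> G)"
  shows "Energy p \<Omega> (piD \<M> Vt VK \<omega>K \<omega>Ks (\<lambda>K. V (xc K)) V)
           (piD \<M> Vt VK \<omega>K \<omega>Ks (cell_average u) (vertex_average u))
         \<le> Energy p \<Omega> V u + ereal (2 * (LINT x:\<Omega>|lebesgue. \<bar>u x\<bar>) * max G 0 * h_mesh \<T>)"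
proof -
  have reorder: "2 * max G 0 * h_mesh \<T> * (LINT x:\<Omega>|lebesgue. \<bar>u x\<bar>)
      = 2 * (LINT x:\<Omega>|lebesgue. \<bar>u x\<bar>) * max G 0 * h_mesh \<T>"
    by (simp only: mult_ac)
  show ?thesis
    using Energy_le_Energy_add[OF Gam_piD_averages_le[OF p u] potential_piD_averages_le[OF u(1) lip der]]
    unfolding reorder .
qed

lemma discrete_energy_finite:
  assumes "admissible_p p"
    and "set_integrable lebesgue \<Omega> u" "AE x in lebesgue. x \<in> \<Omega> \<longrightarrow> 0 \<le> u x"
    and "(\<integral>\<^sup>+x\<in>\<Omega>. e2ennreal (Gam p (u x)) \<partial>lebesgue) < \<infinity>"
  shows "Energy p \<Omega> W (piD \<M> Vt VK \<omega>K \<omega>Ks (cell_average u) (vertex_average u)) < \<infinity>"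
  by (rule Energy_less_infinity[OF le_less_trans[OF Gam_piD_averages_le[OF assms(1-3)] assms(4)]])

end

end

theorem discrete_initial_energy_estimate:
  fixes \<Omega> :: "'a::euclidean_space set" and u0 V :: "'a \<Rightarrow> real"
  assumes bounded: "bounded \<Omega>" and "polyhedral_open \<Omega>" and p: "admissible_p p"
    and disc: "discretization \<Omega> \<M> xc Vt VK \<T> \<alpha> \<omega>K \<omega>Ks"
    and u0: "set_integrable lebesgue \<Omega> u0" "AE x in lebesgue. x \<in> \<Omega> \<longrightarrow> u0 x \<ge> 0"
    and Gam_u0: "(\<integral>\<^sup>+ x\<in>\<Omega>. e2ennreal (Gam p (u0 x)) \<partial>lebesgue) < \<infinity>"
    and lip: "L-lipschitz_on (closure \<Omega>) V"
    and der: "AE x in lebesgue. x \<in> \<Omega> \<longrightarrow> (\<exists>D. (V has_derivative D) (at x) \<and> onorm D \<le> G)"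
  defines "ED \<equiv> Energy p \<Omega> (piD \<M> Vt VK \<omega>K \<omega>Ks (\<lambda>K. V (xc K)) V)
                 (piD \<M> Vt VK \<omega>K \<omega>Ks (\<lambda>K. (LINT x:\<omega>K K|lebesgue. u0 x) / mC VK \<alpha> K)
                   (\<lambda>s. (LINT x:omega_v \<M> VK \<omega>Ks s|lebesgue. u0 x) / mV \<M> VK \<alpha> s))"
    and "C \<equiv> 2 * (LINT x:\<Omega>|lebesgue. \<bar>u0 x\<bar>) * max G 0"
  shows "ED \<le> Energy p \<Omega> V u0 + ereal (C * h_mesh \<T>)"
    and "Energy p \<Omega> V u0 + ereal (C * h_mesh \<T>) \<le> Energy p \<Omega> V u0 + ereal (C * diameter \<Omega>)"
    and "ED < \<infinity>"
proof -
  interpret lumped_mesh \<Omega> \<M> xc Vt VK \<T> \<alpha> \<omega>K \<omega>Ks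
    by (rule discretization_imp_lumped_mesh[OF disc])
  have "open \<Omega>" using \<open>polyhedral_open \<Omega>\<close> by (simp add: polyhedral_open_def)
  have averages: "ED = Energy p \<Omega> (piD \<M> Vt VK \<omega>K \<omega>Ks (\<lambda>K. V (xc K)) V)
                         (piD \<M> Vt VK \<omega>K \<omega>Ks (cell_average u0) (vertex_average u0))"
    by (simp add: ED_def cell_average_def[abs_def] vertex_average_def[abs_def])
  show "ED \<le> Energy p \<Omega> V u0 + ereal (C * h_mesh \<T>)"
    unfolding averages C_def by (rule discrete_energy_le[OF bounded \<open>open \<Omega>\<close> p u0 lip der])
  show "ED < \<infinity>"
    unfolding averages by (rule discrete_energy_finite[OF bounded \<open>open \<Omega>\<close> p u0 Gam_u0])
  have "0 \<le> (LINT x:\<Omega>|lebesgue. \<bar>u0 x\<bar>)"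
    unfolding set_lebesgue_integral_def by (rule Bochner_Integration.integral_nonneg) simp
  then have "C * h_mesh \<T> \<le> C * diameter \<Omega>"
    using h_mesh_le_diameter[OF bounded] by (intro mult_left_mono) (auto simp: C_def)
  then show "Energy p \<Omega> V u0 + ereal (C * h_mesh \<T>) \<le> Energy p \<Omega> V u0 + ereal (C * diameter \<Omega>)"
    by (intro add_left_mono) simp
qed

theorem lemma2p1:
  "\<exists>F :: real \<Rightarrow> real \<Rightarrow> real.
   \<forall>(\<Omega> :: 'a::euclidean_space set) p u0 V G \<M> xc Vt VK \<T> \<alpha> \<omega>K \<omega>Ks.
     DIM('a) \<in> {2, 3} \<and>
     connected \<Omega> \<and> bounded \<Omega> \<and> polyhedral_open \<Omega> \<and>
     admissible_p p \<and>
     discretization \<Omega> \<M> xc Vt VK \<T> \<alpha> \<omega>K \<omega>Ks \<and>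
     set_integrable lebesgue \<Omega> u0 \<and>
     (AE x in lebesgue. x \<in> \<Omega> \<longrightarrow> u0 x \<ge> 0) \<and>
     (LINT x:\<Omega>|lebesgue. u0 x) > 0 \<and>
     (\<integral>\<^sup>+ x\<in>\<Omega>. e2ennreal (Gam p (u0 x)) \<partial>lebesgue) < \<infinity> \<and>
     (\<exists>L. L-lipschitz_on (closure \<Omega>) V) \<and>
     (AE x in lebesgue. x \<in> \<Omega> \<longrightarrow> (\<exists>D. (V has_derivative D) (at x) \<and> onorm D \<le> G))
     \<longrightarrow>
     (let uK = (\<lambda>K. (LINT x:\<omega>K K|lebesgue. u0 x) / mC VK \<alpha> K);
          us = (\<lambda>s. (LINT x:omega_v \<M> VK \<omega>Ks s|lebesgue. u0 x) / mV \<M> VK \<alpha> s);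
          ED = Energy p \<Omega> (piD \<M> Vt VK \<omega>K \<omega>Ks (\<lambda>K. V (xc K)) V)
                          (piD \<M> Vt VK \<omega>K \<omega>Ks uK us);
          C = F (LINT x:\<Omega>|lebesgue. \<bar>u0 x\<bar>) G
      in ED \<le> Energy p \<Omega> V u0 + ereal (C * h_mesh \<T>) \<and>
         Energy p \<Omega> V u0 + ereal (C * h_mesh \<T>) \<le> Energy p \<Omega> V u0 + ereal (C * diameter \<Omega>) \<and>
         ED < \<infinity>)"
  unfolding Let_def
  by (intro exI[of _ "\<lambda>a g. 2 * a * max g 0"] allI impI, elim conjE exE, intro conjI)
    (rule discrete_initial_energy_estimate; assumption)+

end
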